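(* Let $n\in\mathbb{Z}$. Let $t\in[0,1]\mapsto\gamma_t\in\mathcal{I}_n$ be a path and let $\tilde h:[0,1]^2\to\mathcal{I}_n$ be continuous with $\tilde h(0,t)=\gamma_t$ for all $t$. Assume that (i) the map $(t,s)\mapsto\gamma_t(s)$ is $C^1$ on $[0,1]\times S^1$; (ii) for all $t$, $\tilde h(1,t)$ is an embedding; (iii) for all $z$, $\tilde h(z,0)$ and $\tilde h(z,1)$ are embeddings. Then there exists a map $h:[0,1]^2\to\mathcal{I}_n$ such that: for all $t$, $h(0,t)=\gamma_t$; for every $z$, the map $h_z:(t,s)\mapsto h(z,t)(s)$ is $C^1$ on $[0,1]\times S^1$; the map $z\mapsto h_z$ is continuous from $[0,1]$ to the Banach space $C^1([0,1]\times S^1,\mathbb{R}^2)$; for all $t$, $h(1,t)$ is an embedding; and for all $z$, $h(z,0)$ and $h(z,1)$ are embeddings.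
   Context: $S^1=\mathbb{R}/\mathbb{Z}$ with base point $0$. $\mathcal{I}_n$ is the set of $C^1$ immersions $\gamma:S^1\to\mathbb{R}^2$ whose tangent vector has winding number $n$ and such that $\gamma'(0)$ is a positive multiple of $(1,0)$; it is topologized as a subset of the Banach space $C^1(S^1,\mathbb{R}^2)$ with norm $\max(\sup\|f\|,\sup\|f'\|)$. *)

theory Defs
  imports "HOL-Analysis.Analysis"
begin

text \<open>R^2 is modelled by the complex plane; (1,0) corresponds to 1.
  A map S^1 = R/Z \<rightarrow> R^2 is modelled as a 1-periodic map real \<Rightarrow> complex.\<close>

definition C1_loop :: "(real \<Rightarrow> complex) \<Rightarrow> bool" where
  "C1_loop \<gamma> \<longleftrightarrow> (\<forall>s. \<gamma> (s + 1) = \<gamma> s) \<and> (\<forall>s. \<gamma> differentiable (at s))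
     \<and> continuous_on UNIV (\<lambda>s. vector_derivative \<gamma> (at s))"

definition tangent_winding :: "(real \<Rightarrow> complex) \<Rightarrow> int \<Rightarrow> bool" where
  "tangent_winding \<gamma> n \<longleftrightarrow> (\<exists>\<theta>::real \<Rightarrow> real. continuous_on UNIV \<theta> \<and>
     (\<forall>s. vector_derivative \<gamma> (at s) = of_real (cmod (vector_derivative \<gamma> (at s))) * cis (2 * pi * \<theta> s))
     \<and> \<theta> 1 - \<theta> 0 = of_int n)"

definition Imm :: "int \<Rightarrow> (real \<Rightarrow> complex) set" where
  "Imm n = {\<gamma>. C1_loop \<gamma> \<and> (\<forall>s. vector_derivative \<gamma> (at s) \<noteq> 0) \<and> tangent_winding \<gamma> n
      \<and> (\<exists>c>0. vector_derivative \<gamma> (at 0) = of_real c)}"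

definition embedding_loop :: "(real \<Rightarrow> complex) \<Rightarrow> bool" where
  "embedding_loop \<gamma> \<longleftrightarrow> inj_on \<gamma> {0..<1}"

definition c1dist :: "(real \<Rightarrow> complex) \<Rightarrow> (real \<Rightarrow> complex) \<Rightarrow> real" where
  "c1dist f g = max (SUP s\<in>{0..1}. cmod (f s - g s))
     (SUP s\<in>{0..1}. cmod (vector_derivative f (at s) - vector_derivative g (at s)))"

definition C1_continuous_on :: "'a::metric_space set \<Rightarrow> ('a \<Rightarrow> real \<Rightarrow> complex) \<Rightarrow> bool" where
  "C1_continuous_on A H \<longleftrightarrow> (\<forall>x\<in>A. \<forall>e>0. \<exists>d>0. \<forall>y\<in>A. dist y x < d \<longrightarrow> c1dist (H y) (H x) < e)"

definition C1_with_derivs :: "(real \<times> real) set \<Rightarrow> (real \<times> real \<Rightarrow> complex)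
    \<Rightarrow> (real \<times> real \<Rightarrow> complex) \<Rightarrow> (real \<times> real \<Rightarrow> complex) \<Rightarrow> bool" where
  "C1_with_derivs S F Ft Fs \<longleftrightarrow>
     (\<forall>p\<in>S. (F has_derivative (\<lambda>(a, b). a *\<^sub>R Ft p + b *\<^sub>R Fs p)) (at p within S))
     \<and> continuous_on S Ft \<and> continuous_on S Fs"

definition C1_on :: "(real \<times> real) set \<Rightarrow> (real \<times> real \<Rightarrow> complex) \<Rightarrow> bool" where
  "C1_on S F \<longleftrightarrow> (\<exists>Ft Fs. C1_with_derivs S F Ft Fs)"

text \<open>Continuity of z \<mapsto> (F z, Ft z, Fs z) into C^1 of S with the sup norms.\<close>
definition C1_family_continuous :: "real set \<Rightarrow> (real \<times> real) set
   \<Rightarrow> (real \<Rightarrow> real \<times> real \<Rightarrow> complex) \<Rightarrow> (real \<Rightarrow> real \<times> real \<Rightarrow> complex)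
   \<Rightarrow> (real \<Rightarrow> real \<times> real \<Rightarrow> complex) \<Rightarrow> bool" where
  "C1_family_continuous Z S F Ft Fs \<longleftrightarrow>
     (\<forall>z\<in>Z. \<forall>e>0. \<exists>d>0. \<forall>z'\<in>Z. \<bar>z' - z\<bar> < d \<longrightarrow>
        (\<forall>p\<in>S. cmod (F z' p - F z p) \<le> e \<and> cmod (Ft z' p - Ft z p) \<le> e
                \<and> cmod (Fs z' p - Fs z p) \<le> e))"

end

theory Submission
  imports Defs "HOL-Library.Periodic_Fun"
begin

text \<open>First deform each \<open>\<gamma> t\<close> linearly into the Bernstein polynomial in \<open>t\<close> of the loops
  \<open>\<gamma> (k/N)\<close>, then let the Bernstein polynomial of \<open>ht w\<close> follow the given homotopy as \<open>w\<close>
  runs from \<open>0\<close> to \<open>1\<close>.  Being polynomial in \<open>t\<close>, every stage is jointly C1 in \<open>(t, s)\<close>, and it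
  interpolates \<open>ht w\<close> at \<open>t = 0\<close> and \<open>t = 1\<close>, so the side curves are those of \<open>ht\<close>.  For large
  \<open>N\<close> every curve of the deformation is uniformly C1-close to a curve of \<open>ht\<close>.  Immersions with
  given tangent winding number and embeddings form C1-open sets, and a compact C1-continuous
  family of such curves admits a common radius, so the deformation stays in \<open>Imm n\<close> and
  ends in embeddings.\<close>

section \<open>Periodic C1 loops\<close>

abbreviation D :: "(real \<Rightarrow> complex) \<Rightarrow> real \<Rightarrow> complex" where
  "D f s \<equiv> vector_derivative f (at s)"

lemma periodic_frac_eq:
  fixes f :: "real \<Rightarrow> 'a"
  assumes "\<And>s. f (s + 1) = f s"
  shows "f (frac s) = f s"
proof -
  interpret periodic_fun_simple' f by standard (rule assms)
  show ?thesis using plus_of_int[of "frac s" "\<lfloor>s\<rfloor>"] by (simp add: frac_def)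
qed

lemma frac_in_unit_interval: "frac s \<in> {0..1}"
  using frac_lt_1[of s] by simp

lemma C1_loop_periodic: "C1_loop f \<Longrightarrow> f (s + 1) = f s"
  by (simp add: C1_loop_def)

lemma C1_loop_has_vector_derivative: "C1_loop f \<Longrightarrow> (f has_vector_derivative D f s) (at s)"
  by (simp add: C1_loop_def vector_derivative_works[symmetric])

lemma C1_loop_continuous_deriv: "C1_loop f \<Longrightarrow> continuous_on UNIV (D f)"
  by (simp add: C1_loop_def)

lemma C1_loop_continuous: "C1_loop f \<Longrightarrow> continuous_on UNIV f"
  unfolding C1_loop_def by (meson continuous_at_imp_continuous_on differentiable_imp_continuous_within)

lemma C1_loop_deriv_periodic:
  assumes "C1_loop f" shows "D f (s + 1) = D f s"
proof -
  have "((f \<circ> (\<lambda>x. x + 1)) has_vector_derivative (1 *\<^sub>R D f (s + 1))) (at s)"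
    by (rule vector_diff_chain_at) (auto intro!: derivative_eq_intros C1_loop_has_vector_derivative[OF assms])
  moreover have "f \<circ> (\<lambda>x. x + 1) = f" using C1_loop_periodic[OF assms] by auto
  ultimately show ?thesis by (simp add: vector_derivative_at)
qed

lemma C1_loop_frac_eq:
  assumes "C1_loop f" shows "f (frac s) = f s" "D f (frac s) = D f s"
  using periodic_frac_eq[of f] periodic_frac_eq[of "D f"]
    C1_loop_periodic[OF assms] C1_loop_deriv_periodic[OF assms] by auto

lemma C1_loop_sum:
  assumes "finite A" and "\<forall>k\<in>A. C1_loop (G k)"
  shows "C1_loop (\<lambda>s. \<Sum>k\<in>A. c k *\<^sub>R G k s)"
    and "D (\<lambda>s. \<Sum>k\<in>A. c k *\<^sub>R G k s) s = (\<Sum>k\<in>A. c k *\<^sub>R D (G k) s)"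
proof -
  have deriv: "((\<lambda>s. \<Sum>k\<in>A. c k *\<^sub>R G k s) has_vector_derivative (\<Sum>k\<in>A. c k *\<^sub>R D (G k) s)) (at s)" for s
    using assms(2) by (intro has_vector_derivative_sum bounded_linear.has_vector_derivative[OF bounded_linear_scaleR_right]
        C1_loop_has_vector_derivative) auto
  then show D_eq: "D (\<lambda>s. \<Sum>k\<in>A. c k *\<^sub>R G k s) s = (\<Sum>k\<in>A. c k *\<^sub>R D (G k) s)" for s
    by (simp add: vector_derivative_at)
  have "continuous_on UNIV (\<lambda>s. \<Sum>k\<in>A. c k *\<^sub>R D (G k) s)"
    using assms(2) C1_loop_continuous_deriv by (intro continuous_intros) auto
  then show "C1_loop (\<lambda>s. \<Sum>k\<in>A. c k *\<^sub>R G k s)"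
    unfolding C1_loop_def D_eq using assms(2) deriv C1_loop_periodic
    by (auto simp: differentiable_def has_vector_derivative_def intro!: sum.cong)
qed

lemma C1_loop_combination:
  assumes "C1_loop f" and "C1_loop g"
  shows "C1_loop (\<lambda>s. a *\<^sub>R f s + b *\<^sub>R g s)"
    and "D (\<lambda>s. a *\<^sub>R f s + b *\<^sub>R g s) s = a *\<^sub>R D f s + b *\<^sub>R D g s"
proof -
  have deriv: "((\<lambda>s. a *\<^sub>R f s + b *\<^sub>R g s) has_vector_derivative (a *\<^sub>R D f s + b *\<^sub>R D g s)) (at s)" for s
    using assms by (intro has_vector_derivative_add bounded_linear.has_vector_derivative[OF bounded_linear_scaleR_right]
        C1_loop_has_vector_derivative) auto
  then show D_eq: "D (\<lambda>s. a *\<^sub>R f s + b *\<^sub>R g s) s = a *\<^sub>R D f s + b *\<^sub>R D g s" for s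
    by (simp add: vector_derivative_at)
  have "continuous_on UNIV (\<lambda>s. a *\<^sub>R D f s + b *\<^sub>R D g s)"
    using assms C1_loop_continuous_deriv by (intro continuous_intros) auto
  then show "C1_loop (\<lambda>s. a *\<^sub>R f s + b *\<^sub>R g s)"
    unfolding C1_loop_def D_eq using deriv C1_loop_periodic[OF assms(1)] C1_loop_periodic[OF assms(2)]
    by (auto simp: differentiable_def has_vector_derivative_def)
qed

lemma c1dist_pointwise:
  assumes f: "C1_loop f" and g: "C1_loop g"
  shows "cmod (f s - g s) \<le> c1dist f g" and "cmod (D f s - D g s) \<le> c1dist f g"
proof -
  have bdd: "bdd_above ((\<lambda>s. cmod (F s)) ` {0..1})" if "continuous_on UNIV F" for F :: "real \<Rightarrow> complex"
    using that by (intro bounded_imp_bdd_above compact_imp_bounded compact_continuous_image)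
      (auto intro: continuous_on_norm continuous_on_subset)
  have "cmod (f (frac s) - g (frac s)) \<le> (SUP s\<in>{0..1}. cmod (f s - g s))"
    by (intro cSUP_upper frac_in_unit_interval bdd continuous_on_diff C1_loop_continuous f g)
  moreover have "cmod (D f (frac s) - D g (frac s)) \<le> (SUP s\<in>{0..1}. cmod (D f s - D g s))"
    by (intro cSUP_upper frac_in_unit_interval bdd continuous_on_diff C1_loop_continuous_deriv f g)
  ultimately show "cmod (f s - g s) \<le> c1dist f g" and "cmod (D f s - D g s) \<le> c1dist f g"
    unfolding c1dist_def C1_loop_frac_eq[OF f] C1_loop_frac_eq[OF g] by auto
qed

definition C1_close :: "real \<Rightarrow> (real \<Rightarrow> complex) \<Rightarrow> (real \<Rightarrow> complex) \<Rightarrow> bool" where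
  "C1_close \<delta> g f \<longleftrightarrow> (\<forall>s. cmod (g s - f s) \<le> \<delta> \<and> cmod (D g s - D f s) \<le> \<delta>)"

lemma C1_close_mono: "C1_close \<delta> g f \<Longrightarrow> \<delta> \<le> \<delta>' \<Longrightarrow> C1_close \<delta>' g f"
  unfolding C1_close_def by (meson order_trans)

lemma continuous_on_Times_UNIV_uniformI:
  fixes G :: "'a::metric_space \<Rightarrow> real \<Rightarrow> 'b::real_normed_vector"
  assumes cont: "\<And>p. p \<in> K \<Longrightarrow> continuous_on UNIV (G p)"
    and unif: "\<And>p e. p \<in> K \<Longrightarrow> e > 0 \<Longrightarrow> \<exists>d>0. \<forall>q\<in>K. dist q p < d \<longrightarrow> (\<forall>s. norm (G q s - G p s) < e)"
  shows "continuous_on (K \<times> UNIV) (\<lambda>(p, s). G p s)"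
  unfolding continuous_on_iff
proof (intro ballI allI impI)
  fix x :: "'a \<times> real" and e :: real assume x: "x \<in> K \<times> UNIV" and e: "e > 0"
  obtain p s where x_eq: "x = (p, s)" and p: "p \<in> K" using x by auto
  obtain d1 where d1: "d1 > 0" "\<forall>q\<in>K. dist q p < d1 \<longrightarrow> (\<forall>s. norm (G q s - G p s) < e/2)"
    using unif[OF p, of "e/2"] e by auto
  obtain d2 where d2: "d2 > 0" "\<forall>s'. dist s' s < d2 \<longrightarrow> dist (G p s') (G p s) < e/2"
    using cont[OF p] e unfolding continuous_on_iff by (meson UNIV_I half_gt_zero)
  show "\<exists>d>0. \<forall>x'\<in>K \<times> UNIV. dist x' x < d \<longrightarrow> dist ((\<lambda>(p, s). G p s) x') ((\<lambda>(p, s). G p s) x) < e"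
  proof (intro exI[of _ "min d1 d2"] conjI ballI impI)
    fix x' :: "'a \<times> real" assume x': "x' \<in> K \<times> UNIV" and close: "dist x' x < min d1 d2"
    obtain q s' where x'_eq: "x' = (q, s')" and q: "q \<in> K" using x' by auto
    have "dist q p < d1" "dist s' s < d2"
      using close dist_fst_le[of x' x] dist_snd_le[of x' x] unfolding x_eq x'_eq by auto
    then have "norm (G q s' - G p s') < e/2" "norm (G p s' - G p s) < e/2"
      using d1 d2 q by (auto simp: dist_norm)
    then show "dist ((\<lambda>(p, s). G p s) x') ((\<lambda>(p, s). G p s) x) < e"
      unfolding x_eq x'_eq dist_norm using norm_diff_triangle_less by fastforce
  qed (use d1 d2 in auto)
qed

lemma C1_continuous_on_joint:
  fixes H :: "'a::metric_space \<Rightarrow> real \<Rightarrow> complex"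
  assumes HC: "C1_continuous_on K H" and HL: "\<forall>p\<in>K. C1_loop (H p)"
  shows "continuous_on (K \<times> UNIV) (\<lambda>(p, s). H p s)"
    and "continuous_on (K \<times> UNIV) (\<lambda>(p, s). D (H p) s)"
proof -
  have close: "\<exists>d>0. \<forall>q\<in>K. dist q p < d \<longrightarrow> c1dist (H q) (H p) < e" if "p \<in> K" "e > 0" for p e
    using HC that unfolding C1_continuous_on_def by blast
  show "continuous_on (K \<times> UNIV) (\<lambda>(p, s). H p s)"
  proof (rule continuous_on_Times_UNIV_uniformI)
    show "continuous_on UNIV (H p)" if "p \<in> K" for p using HL that C1_loop_continuous by blast
    show "\<exists>d>0. \<forall>q\<in>K. dist q p < d \<longrightarrow> (\<forall>s. norm (H q s - H p s) < e)" if "p \<in> K" "e > 0" for p e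
      using close[OF that] HL that c1dist_pointwise(1) by (meson le_less_trans)
  qed
  show "continuous_on (K \<times> UNIV) (\<lambda>(p, s). D (H p) s)"
  proof (rule continuous_on_Times_UNIV_uniformI)
    show "continuous_on UNIV (D (H p))" if "p \<in> K" for p using HL that C1_loop_continuous_deriv by blast
    show "\<exists>d>0. \<forall>q\<in>K. dist q p < d \<longrightarrow> (\<forall>s. norm (D (H q) s - D (H p) s) < e)" if "p \<in> K" "e > 0" for p e
      using close[OF that] HL that c1dist_pointwise(2) by (meson le_less_trans)
  qed
qed

lemma C1_continuous_on_compact_bounded:
  fixes H :: "'a::metric_space \<Rightarrow> real \<Rightarrow> complex"
  assumes "compact K" and "C1_continuous_on K H" and HL: "\<forall>p\<in>K. C1_loop (H p)"
  shows "\<exists>M. \<forall>p\<in>K. \<forall>s. cmod (H p s) \<le> M \<and> cmod (D (H p) s) \<le> M"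
proof -
  have KI: "compact (K \<times> {0..1::real})" using assms(1) by (intro compact_Times) auto
  have "bounded ((\<lambda>(p, s). H p s) ` (K \<times> {0..1}))" "bounded ((\<lambda>(p, s). D (H p) s) ` (K \<times> {0..1}))"
    using C1_continuous_on_joint[OF assms(2,3)]
    by (auto intro!: compact_imp_bounded compact_continuous_image[OF _ KI] elim: continuous_on_subset)
  then obtain M1 M2 where M1: "\<forall>x\<in>K \<times> {0..1}. cmod ((\<lambda>(p, s). H p s) x) \<le> M1"
    and M2: "\<forall>x\<in>K \<times> {0..1}. cmod ((\<lambda>(p, s). D (H p) s) x) \<le> M2"
    unfolding bounded_iff by (simp only: ball_simps) blast
  have "cmod (H p s) \<le> max M1 M2 \<and> cmod (D (H p) s) \<le> max M1 M2" if p: "p \<in> K" for p s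
    using M1[rule_format, of "(p, frac s)"] M2[rule_format, of "(p, frac s)"] p frac_in_unit_interval[of s]
    by (auto simp: C1_loop_frac_eq[OF HL[rule_format, OF p]])
  then show ?thesis by blast
qed

lemma C1_continuous_on_compact_uniform:
  fixes H :: "'a::metric_space \<Rightarrow> real \<Rightarrow> complex"
  assumes "compact K" and "C1_continuous_on K H" and HL: "\<forall>p\<in>K. C1_loop (H p)" and e: "e > 0"
  shows "\<exists>d>0. \<forall>p\<in>K. \<forall>q\<in>K. dist p q < d \<longrightarrow> C1_close e (H p) (H q)"
proof -
  have KI: "compact (K \<times> {0..1::real})" using assms(1) by (intro compact_Times) auto
  have "uniformly_continuous_on (K \<times> {0..1}) (\<lambda>(p, s). H p s)"
    using C1_continuous_on_joint(1)[OF assms(2,3)]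
    by (intro compact_uniformly_continuous[OF _ KI]) (auto elim: continuous_on_subset)
  from uniformly_continuous_onE[OF this e] obtain d1 where d1: "d1 > 0"
    "\<And>x x'. x \<in> K \<times> {0..1} \<Longrightarrow> x' \<in> K \<times> {0..1} \<Longrightarrow> dist x' x < d1
        \<Longrightarrow> dist ((\<lambda>(p, s). H p s) x') ((\<lambda>(p, s). H p s) x) < e"
    by blast
  have "uniformly_continuous_on (K \<times> {0..1}) (\<lambda>(p, s). D (H p) s)"
    using C1_continuous_on_joint(2)[OF assms(2,3)]
    by (intro compact_uniformly_continuous[OF _ KI]) (auto elim: continuous_on_subset)
  from uniformly_continuous_onE[OF this e] obtain d2 where d2: "d2 > 0"
    "\<And>x x'. x \<in> K \<times> {0..1} \<Longrightarrow> x' \<in> K \<times> {0..1} \<Longrightarrow> dist x' x < d2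
        \<Longrightarrow> dist ((\<lambda>(p, s). D (H p) s) x') ((\<lambda>(p, s). D (H p) s) x) < e"
    by blast
  have "C1_close e (H p) (H q)" if "p \<in> K" "q \<in> K" "dist p q < min d1 d2" for p q
    unfolding C1_close_def
  proof
    fix s :: real
    have "(p, frac s) \<in> K \<times> {0..1}" "(q, frac s) \<in> K \<times> {0..1}" "dist (p, frac s) (q, frac s) = dist p q"
      using that frac_in_unit_interval by (auto simp: dist_Pair_Pair)
    then have "cmod (H p (frac s) - H q (frac s)) < e" "cmod (D (H p) (frac s) - D (H q) (frac s)) < e"
      using d1(2)[of "(q, frac s)" "(p, frac s)"] d2(2)[of "(q, frac s)" "(p, frac s)"] that
      by (auto simp: dist_norm)
    then show "cmod (H p s - H q s) \<le> e \<and> cmod (D (H p) s - D (H q) s) \<le> e"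
      using HL that by (simp add: C1_loop_frac_eq)
  qed
  then show ?thesis using d1 d2 by (intro exI[of _ "min d1 d2"]) auto
qed

section \<open>Openness of immersions with given winding and of embeddings\<close>

lemma C1_loop_deriv_bounded_below:
  assumes f: "C1_loop f" and nz: "\<forall>s. D f s \<noteq> 0"
  shows "\<exists>m>0. \<forall>s. m \<le> cmod (D f s)"
proof -
  have "continuous_on {0..1} (\<lambda>s. cmod (D f s))"
    by (intro continuous_intros continuous_on_subset[OF C1_loop_continuous_deriv[OF f]]) simp
  from continuous_attains_inf[OF compact_Icc _ this] obtain s0
    where s0: "\<forall>s\<in>{0..1}. cmod (D f s0) \<le> cmod (D f s)"
    by auto
  have "cmod (D f s0) \<le> cmod (D f s)" for s
    using s0[rule_format, OF frac_in_unit_interval[of s]] by (simp add: C1_loop_frac_eq(2)[OF f])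
  then show ?thesis using nz by (intro exI[of _ "cmod (D f s0)"]) auto
qed

text \<open>Writing \<open>D g = q * D f\<close> with \<open>Re q > 0\<close>, the angle of \<open>D g\<close> is that of \<open>D f\<close>
  plus the continuous periodic function \<open>Arg q / (2 * pi)\<close>, which does not change the winding number.\<close>
lemma tangent_winding_perturb:
  assumes f: "C1_loop f" and g: "C1_loop g" and tw: "tangent_winding f n"
    and close: "\<And>s. cmod (D g s - D f s) < cmod (D f s)"
  shows "tangent_winding g n"
proof -
  obtain \<theta> where \<theta>: "continuous_on UNIV \<theta>"
    "\<And>s. D f s = of_real (cmod (D f s)) * cis (2 * pi * \<theta> s)" "\<theta> 1 - \<theta> 0 = of_int n"
    using tw unfolding tangent_winding_def by blast
  have nz: "D f s \<noteq> 0" for s using close[of s] by auto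
  define q where "q s = D g s / D f s" for s
  have Dg: "D g s = q s * D f s" for s using nz by (simp add: q_def)
  have "cmod (q s - 1) < 1" for s
  proof -
    have "q s - 1 = (D g s - D f s) / D f s" using nz by (simp add: q_def field_simps)
    then show ?thesis using close[of s] nz by (simp add: norm_divide)
  qed
  then have "Re (q s) > 0" for s
    using abs_Re_le_cmod[of "q s - 1"] by (smt (verit) minus_complex.simps(1) one_complex.sel(1))
  then have q_Arg: "q s \<notin> \<real>\<^sub>\<le>\<^sub>0" for s by (metis complex_nonpos_Reals_iff not_less)
  define \<theta>g where "\<theta>g s = \<theta> s + Arg (q s) / (2 * pi)" for s
  have "continuous_on UNIV q"
    unfolding q_def using C1_loop_continuous_deriv[OF g] C1_loop_continuous_deriv[OF f] nz
    by (intro continuous_intros) auto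
  then have "continuous_on UNIV \<theta>g"
    unfolding \<theta>g_def using \<theta>(1) q_Arg by (intro continuous_intros) auto
  moreover have "D g s = of_real (cmod (D g s)) * cis (2 * pi * \<theta>g s)" for s
  proof -
    have "D g s = rcis (cmod (q s)) (Arg (q s)) * (of_real (cmod (D f s)) * cis (2 * pi * \<theta> s))"
      using Dg \<theta>(2) by (simp add: rcis_cmod_Arg)
    then show ?thesis
      by (simp add: rcis_def Dg norm_mult cis_mult \<theta>g_def algebra_simps)
  qed
  moreover have "\<theta>g 1 - \<theta>g 0 = of_int n"
    using \<theta>(3) C1_loop_deriv_periodic[OF g, of 0] C1_loop_deriv_periodic[OF f, of 0]
    by (simp add: \<theta>g_def q_def)
  ultimately show ?thesis unfolding tangent_winding_def by blast
qed

lemma Imm_C1_open: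
  assumes "f \<in> Imm n"
  shows "\<exists>\<delta>>0. \<forall>g. C1_loop g \<and> (\<exists>c>0. D g 0 = of_real c) \<and> C1_close \<delta> g f \<longrightarrow> g \<in> Imm n"
proof -
  have f: "C1_loop f" and nz: "\<forall>s. D f s \<noteq> 0" and tw: "tangent_winding f n"
    using assms by (auto simp: Imm_def)
  obtain m where m: "m > 0" "\<forall>s. m \<le> cmod (D f s)" using C1_loop_deriv_bounded_below[OF f nz] by blast
  have "g \<in> Imm n" if g: "C1_loop g" "\<exists>c>0. D g 0 = of_real c" and close: "C1_close (m/2) g f" for g
  proof -
    have lt: "cmod (D g s - D f s) < cmod (D f s)" for s
      using close m unfolding C1_close_def by (smt (verit) field_sum_of_halves)
    then have "D g s \<noteq> 0" for s using lt[of s] by force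
    then show ?thesis
      using tangent_winding_perturb[OF f g(1) tw lt] g unfolding Imm_def by blast
  qed
  then show ?thesis using m by (intro exI[of _ "m/2"]) auto
qed

lemma C1_loop_deriv_uniformly_continuous:
  assumes f: "C1_loop f" and e: "e > 0"
  shows "\<exists>\<eta>>0. \<eta> \<le> 1/4 \<and> (\<forall>u v. \<bar>u - v\<bar> \<le> \<eta> \<longrightarrow> cmod (D f u - D f v) \<le> e)"
proof -
  have "uniformly_continuous_on {-1..2} (D f)"
    by (rule compact_uniformly_continuous[OF continuous_on_subset[OF C1_loop_continuous_deriv[OF f]]]) auto
  then obtain d where d: "d > 0"
    "\<And>x x'. x \<in> {-1..2} \<Longrightarrow> x' \<in> {-1..2} \<Longrightarrow> dist x' x < d \<Longrightarrow> dist (D f x') (D f x) < e"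
    using uniformly_continuous_onE[OF _ e] by metis
  have "cmod (D f u - D f v) \<le> e" if uv: "\<bar>u - v\<bar> \<le> min (d/2) (1/4)" for u v
  proof -
    interpret periodic_fun_simple' "D f" by standard (rule C1_loop_deriv_periodic[OF f])
    have shift: "D f (x - of_int \<lfloor>u\<rfloor>) = D f x" for x using minus_of_int[of x "\<lfloor>u\<rfloor>"] by simp
    have "\<bar>u - v\<bar> \<le> 1/4" "\<bar>u - v\<bar> < d" using uv d(1) by auto
    then have "u - of_int \<lfloor>u\<rfloor> \<in> {-1..2}" "v - of_int \<lfloor>u\<rfloor> \<in> {-1..2}"
      "dist (v - of_int \<lfloor>u\<rfloor>) (u - of_int \<lfloor>u\<rfloor>) < d"
      using of_int_floor_le[of u] real_of_int_floor_add_one_gt[of u]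
      unfolding atLeastAtMost_iff dist_real_def abs_le_iff abs_less_iff by linarith+
    then have "dist (D f (v - of_int \<lfloor>u\<rfloor>)) (D f (u - of_int \<lfloor>u\<rfloor>)) < e" by (rule d(2))
    then show ?thesis by (simp add: shift dist_norm norm_minus_commute)
  qed
  then show ?thesis using d(1) by (intro exI[of _ "min (d/2) (1/4)"]) auto
qed

lemma C1_loop_short_chord_nonzero:
  assumes g: "C1_loop g" and ab: "a < b" and nz: "D g a \<noteq> 0"
    and close: "\<And>u. u \<in> {a..b} \<Longrightarrow> cmod (D g u - D g a) \<le> cmod (D g a) / 2"
  shows "g b \<noteq> g a"
proof
  assume "g b = g a"
  have "cmod (g b - g a - (b - a) *\<^sub>R D g a) \<le> norm (b - a) * (cmod (D g a) / 2)"
    using ab close C1_loop_has_vector_derivative[OF g]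
    by (intro vector_differentiable_bound_linearization[where S="{a..b}"])
      (auto intro: has_vector_derivative_at_within simp: closed_segment_eq_real_ivl)
  then have "(b - a) * cmod (D g a) \<le> (b - a) * (cmod (D g a) / 2)"
    using ab \<open>g b = g a\<close> by simp
  then have "cmod (D g a) \<le> cmod (D g a) / 2" using ab by (simp add: mult_le_cancel_left_pos)
  then show False using nz by simp
qed

lemma embedding_loop_eq_imp_diff_Ints:
  assumes f: "C1_loop f" and emb: "embedding_loop f" and eq: "f x = f y"
  shows "x - y \<in> \<int>"
proof -
  have "f (frac x) = f (frac y)" using eq by (simp add: C1_loop_frac_eq[OF f])
  then have "frac x = frac y"
    using emb frac_lt_1 unfolding embedding_loop_def by (meson atLeastLessThan_iff frac_ge_0 inj_onD)
  then show ?thesis using frac_diff_eq[of x y] by simp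
qed

lemma embedding_loop_long_chord_bound:
  assumes f: "C1_loop f" and emb: "embedding_loop f" and \<eta>: "0 < \<eta>" "\<eta> \<le> 1/2"
  shows "\<exists>\<mu>>0. \<forall>s\<in>{0..1}. \<forall>r\<in>{\<eta>..1-\<eta>}. \<mu> \<le> cmod (f (s + r) - f s)"
proof -
  define K where "K = {0..1::real} \<times> {\<eta>..1-\<eta>}"
  have "continuous_on K (\<lambda>x. f (fst x + snd x))" "continuous_on K (\<lambda>x. f (fst x))"
    by (rule continuous_on_compose2[OF C1_loop_continuous[OF f]]; auto intro!: continuous_intros)+
  then have "continuous_on K (\<lambda>x. cmod (f (fst x + snd x) - f (fst x)))"
    by (intro continuous_intros)
  moreover have "compact K" "K \<noteq> {}" using \<eta> unfolding K_def by (auto intro!: compact_Times)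
  ultimately obtain x0 where x0: "x0 \<in> K"
    and min: "\<forall>x\<in>K. cmod (f (fst x0 + snd x0) - f (fst x0)) \<le> cmod (f (fst x + snd x) - f (fst x))"
    using continuous_attains_inf[of K] by blast
  obtain s0 r0 where x0_eq: "x0 = (s0, r0)" by fastforce
  have "f (s0 + r0) \<noteq> f s0"
  proof
    assume "f (s0 + r0) = f s0"
    then have "r0 \<in> \<int>" using embedding_loop_eq_imp_diff_Ints[OF f emb] by force
    moreover have "0 < r0" "r0 < 1" using x0 \<eta> unfolding K_def x0_eq by auto
    ultimately show False by (auto elim!: Ints_cases)
  qed
  then show ?thesis using min unfolding K_def x0_eq by (intro exI[of _ "cmod (f (s0 + r0) - f s0)"]) auto
qed

lemma embedding_loopI_chords:
  assumes g: "C1_loop g" and \<eta>: "\<eta> \<le> 1/2"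
    and short: "\<And>a b. a < b \<Longrightarrow> b - a \<le> \<eta> \<Longrightarrow> g b \<noteq> g a"
    and long: "\<And>x y. x \<in> {0..1} \<Longrightarrow> y - x \<in> {\<eta>..1-\<eta>} \<Longrightarrow> g y \<noteq> g x"
  shows "embedding_loop g"
proof -
  have "g x \<noteq> g y" if xy: "x \<in> {0..<1}" "y \<in> {0..<1}" "x < y" for x y
  proof -
    consider "y - x \<le> \<eta>" | "1 - \<eta> \<le> y - x" | "y - x \<in> {\<eta>..1-\<eta>}" by force
    then show ?thesis
    proof cases
      case 1 then show ?thesis using short[of x y] xy by auto
    next
      case 2 then show ?thesis using short[of y "x + 1"] xy C1_loop_periodic[OF g] by auto
    next
      case 3 then show ?thesis using long[of x y] xy by auto
    qed
  qed
  then show ?thesis unfolding embedding_loop_def inj_on_def by (metis linorder_neqE_linordered_idom)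
qed

text \<open>Near-diagonal pairs are separated because \<open>D g\<close> varies little on a short arc, far-apart
  pairs because \<open>g\<close> is uniformly close to \<open>f\<close>.\<close>
lemma embedding_loop_C1_open:
  assumes f: "C1_loop f" and nz: "\<forall>s. D f s \<noteq> 0" and emb: "embedding_loop f"
  shows "\<exists>\<delta>>0. \<forall>g. C1_loop g \<and> C1_close \<delta> g f \<longrightarrow> embedding_loop g"
proof -
  obtain m where m: "m > 0" "\<forall>s. m \<le> cmod (D f s)"
    using C1_loop_deriv_bounded_below[OF f nz] by blast
  obtain \<eta> where \<eta>: "\<eta> > 0" "\<eta> \<le> 1/4" "\<forall>u v. \<bar>u - v\<bar> \<le> \<eta> \<longrightarrow> cmod (D f u - D f v) \<le> m/8"
    using C1_loop_deriv_uniformly_continuous[OF f, of "m/8"] m by auto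
  obtain \<mu> where \<mu>: "\<mu> > 0" "\<forall>s\<in>{0..1}. \<forall>r\<in>{\<eta>..1-\<eta>}. \<mu> \<le> cmod (f (s + r) - f s)"
    using embedding_loop_long_chord_bound[OF f emb, of \<eta>] \<eta> by auto
  have "embedding_loop g" if g: "C1_loop g" and close: "C1_close (min (m/8) (\<mu>/4)) g f" for g
  proof (rule embedding_loopI_chords[OF g])
    have gf: "cmod (g s - f s) \<le> \<mu>/4" "cmod (D g s - D f s) \<le> m/8" for s
      using close unfolding C1_close_def by auto
    show "\<eta> \<le> 1/2" using \<eta> by simp
    show "g b \<noteq> g a" if "a < b" "b - a \<le> \<eta>" for a b
    proof (rule C1_loop_short_chord_nonzero[OF g \<open>a < b\<close>])
      have Dga: "7/8 * m \<le> cmod (D g a)"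
        using m(2)[rule_format, of a] gf(2)[of a] norm_triangle_ineq3[of "D g a" "D f a"] by argo
      then show "D g a \<noteq> 0" using m(1) by auto
      show "cmod (D g u - D g a) \<le> cmod (D g a) / 2" if "u \<in> {a..b}" for u
      proof -
        have "cmod (D f u - D f a) \<le> m/8" using \<eta>(3) that \<open>b - a \<le> \<eta>\<close> by auto
        then have "cmod (D g u - D g a) \<le> m/8 + m/8 + m/8"
          using gf(2)[of u] gf(2)[of a] norm_diff_triangle_ineq[of "D g u - D f u" "D f u - D f a" 0 "D g a - D f a"]
          by (smt (verit) diff_add_cancel diff_diff_eq2 norm_minus_commute norm_triangle_ineq4)
        then show ?thesis using Dga m(1) by linarith
      qed
    qed
    show "g y \<noteq> g x" if "x \<in> {0..1}" "y - x \<in> {\<eta>..1-\<eta>}" for x y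
    proof -
      have "\<mu> \<le> cmod (f y - f x)" using \<mu>(2) that by force
      moreover have "cmod (f y - f x) \<le> cmod (g y - g x) + cmod (g y - f y) + cmod (g x - f x)"
        using norm_triangle_ineq4[of "g y - g x" "g y - f y"]
          norm_triangle_ineq[of "g y - g x - (g y - f y)" "g x - f x"]
        by (simp add: algebra_simps)
      ultimately show ?thesis using gf(1)[of x] gf(1)[of y] \<mu>(1) by auto
    qed
  qed
  then show ?thesis using m \<mu> by (intro exI[of _ "min (m/8) (\<mu>/4)"]) auto
qed

lemma C1_close_trans: "C1_close a g f \<Longrightarrow> C1_close b f h \<Longrightarrow> C1_close (a + b) g h"
  unfolding C1_close_def by (meson add_mono norm_diff_triangle_le)

lemma c1dist_imp_C1_close: "C1_loop f \<Longrightarrow> C1_loop g \<Longrightarrow> c1dist f g \<le> \<delta> \<Longrightarrow> C1_close \<delta> f g"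
  unfolding C1_close_def using c1dist_pointwise order_trans by blast

lemma C1_open_uniform_on_compact:
  fixes F :: "'a::metric_space \<Rightarrow> real \<Rightarrow> complex"
  assumes K: "compact K" and FC: "C1_continuous_on K F" and FL: "\<forall>p\<in>K. C1_loop (F p)"
    and open_at: "\<forall>p\<in>K. \<exists>\<delta>>0. \<forall>g. C1_loop g \<and> Q g \<and> C1_close \<delta> g (F p) \<longrightarrow> P g"
  shows "\<exists>\<delta>>0. \<forall>p\<in>K. \<forall>g. C1_loop g \<and> Q g \<and> C1_close \<delta> g (F p) \<longrightarrow> P g"
proof (rule ccontr)
  assume "\<not> ?thesis"
  then have "\<forall>k::nat. \<exists>p g. p \<in> K \<and> C1_loop g \<and> Q g \<and> C1_close (1 / Suc k) g (F p) \<and> \<not> P g"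
    by (metis of_nat_0_less_iff zero_less_Suc zero_less_divide_1_iff)
  then obtain p g where pg: "\<And>k. p k \<in> K \<and> C1_loop (g k) \<and> Q (g k) \<and> C1_close (1 / Suc k) (g k) (F (p k)) \<and> \<not> P (g k)"
    by metis
  then obtain l r where l: "l \<in> K" and r: "strict_mono r" and lim: "(p \<circ> r) \<longlonglongrightarrow> l"
    using compact_imp_seq_compact[OF K] unfolding seq_compact_def by metis
  obtain \<delta> where \<delta>: "\<delta> > 0" "\<forall>g. C1_loop g \<and> Q g \<and> C1_close \<delta> g (F l) \<longrightarrow> P g"
    using open_at l by blast
  obtain d where d: "d > 0" "\<forall>q\<in>K. dist q l < d \<longrightarrow> c1dist (F q) (F l) < \<delta>/2"
    using FC l \<delta>(1) unfolding C1_continuous_on_def by (meson half_gt_zero)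
  obtain N where N: "\<forall>n\<ge>N. dist ((p \<circ> r) n) l < d" using lim d(1) lim_sequentially by metis
  obtain M where M: "1 / real (Suc M) < \<delta>/2" using \<delta>(1) by (meson half_gt_zero nat_approx_posE)
  define k where "k = r (max N M)"
  have "1 / real (Suc k) \<le> 1 / real (Suc M)"
    using seq_suble[OF r, of "max N M"] unfolding k_def by (simp add: frac_le)
  then have "C1_close (1 / Suc k) (g k) (F (p k))" "1 / real (Suc k) \<le> \<delta>/2"
    using pg M by auto
  moreover have "C1_close (\<delta>/2) (F (p k)) (F l)"
    using N d(2) pg[of k] FL l unfolding k_def by (intro c1dist_imp_C1_close) (auto intro: less_imp_le)
  ultimately have "C1_close \<delta> (g k) (F l)"
    by (metis C1_close_mono C1_close_trans add_right_mono field_sum_of_halves)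
  then show False using \<delta>(2) pg by blast
qed

lemma Imm_C1_open_uniform:
  fixes F :: "'a::metric_space \<Rightarrow> real \<Rightarrow> complex"
  assumes "compact K" and "C1_continuous_on K F" and "\<forall>p\<in>K. F p \<in> Imm n"
  shows "\<exists>\<delta>>0. \<forall>p\<in>K. \<forall>g. C1_loop g \<and> (\<exists>c>0. D g 0 = of_real c) \<and> C1_close \<delta> g (F p) \<longrightarrow> g \<in> Imm n"
  using assms Imm_C1_open by (intro C1_open_uniform_on_compact) (auto simp: Imm_def)

lemma embedding_loop_C1_open_uniform:
  fixes F :: "'a::metric_space \<Rightarrow> real \<Rightarrow> complex"
  assumes "compact K" and "C1_continuous_on K F"
    and "\<forall>p\<in>K. C1_loop (F p) \<and> (\<forall>s. D (F p) s \<noteq> 0) \<and> embedding_loop (F p)"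
  shows "\<exists>\<delta>>0. \<forall>p\<in>K. \<forall>g. C1_loop g \<and> C1_close \<delta> g (F p) \<longrightarrow> embedding_loop g"
  using C1_open_uniform_on_compact[OF assms(1,2), of "\<lambda>_. True" embedding_loop] assms embedding_loop_C1_open
  by auto

lemma C1_continuous_on_slice:
  assumes "C1_continuous_on (A \<times> B) (\<lambda>(z, t). H z t)" and "z \<in> A"
  shows "C1_continuous_on B (H z)"
  unfolding C1_continuous_on_def
proof (intro ballI allI impI)
  fix x e assume "x \<in> B" "(0::real) < e"
  then obtain d where "d > 0" "\<forall>y\<in>A \<times> B. dist y (z, x) < d \<longrightarrow> c1dist ((\<lambda>(z, t). H z t) y) (H z x) < e"
    using assms unfolding C1_continuous_on_def by fastforce
  then show "\<exists>d>0. \<forall>y\<in>B. dist y x < d \<longrightarrow> c1dist (H z y) (H z x) < e"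
    using assms(2) by (intro exI[of _ d]) (auto simp: dist_Pair_Pair)
qed

lemma homotopy_C1_tolerance:
  fixes H :: "real \<Rightarrow> real \<Rightarrow> real \<Rightarrow> complex"
  assumes H_Imm: "\<forall>z\<in>{0..1}. \<forall>t\<in>{0..1}. H z t \<in> Imm n"
    and H_cont: "C1_continuous_on ({0..1} \<times> {0..1}) (\<lambda>(z, t). H z t)"
    and H_end: "\<forall>t\<in>{0..1}. embedding_loop (H 1 t)"
  shows "\<exists>e>0. (\<forall>z\<in>{0..1}. \<forall>t\<in>{0..1}. \<forall>g. C1_loop g \<and> (\<exists>c>0. D g 0 = of_real c) \<and> C1_close e g (H z t)
      \<longrightarrow> g \<in> Imm n) \<and> (\<forall>t\<in>{0..1}. \<forall>g. C1_loop g \<and> C1_close e g (H 1 t) \<longrightarrow> embedding_loop g)"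
proof -
  have "\<forall>p\<in>{0..1} \<times> {0..1}. (\<lambda>(z, t). H z t) p \<in> Imm n" using H_Imm by auto
  from Imm_C1_open_uniform[OF compact_Times[OF compact_Icc compact_Icc] H_cont this]
  obtain \<delta>1 where "\<delta>1 > 0" and \<delta>1: "\<forall>z\<in>{0..1}. \<forall>t\<in>{0..1}. \<forall>g. C1_loop g \<and> (\<exists>c>0. D g 0 = of_real c)
      \<and> C1_close \<delta>1 g (H z t) \<longrightarrow> g \<in> Imm n" by auto
  have "\<forall>t\<in>{0..1}. C1_loop (H 1 t) \<and> (\<forall>s. D (H 1 t) s \<noteq> 0) \<and> embedding_loop (H 1 t)"
    using H_Imm H_end by (simp add: Imm_def)
  from embedding_loop_C1_open_uniform[OF compact_Icc C1_continuous_on_slice[OF H_cont] this]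
  obtain \<delta>2 where "\<delta>2 > 0" and \<delta>2: "\<forall>t\<in>{0..1}. \<forall>g. C1_loop g \<and> C1_close \<delta>2 g (H 1 t) \<longrightarrow> embedding_loop g"
    by auto
  show ?thesis
    using \<open>\<delta>1 > 0\<close> \<open>\<delta>2 > 0\<close> \<delta>1 \<delta>2 C1_close_mono[of "min \<delta>1 \<delta>2"]
    by (intro exI[of _ "min \<delta>1 \<delta>2"]) (meson min.cobounded1 min.cobounded2 min_less_iff_conj)
qed

section \<open>Bernstein combinations in the time variable\<close>

definition grid_combination ::
    "(nat \<Rightarrow> real \<Rightarrow> real) \<Rightarrow> nat \<Rightarrow> (real \<Rightarrow> 'b \<Rightarrow> 'a::real_vector) \<Rightarrow> real \<Rightarrow> 'b \<Rightarrow> 'a" where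
  "grid_combination c N H t s = (\<Sum>k\<le>N. c k t *\<^sub>R H (real k / real N) s)"

abbreviation bernstein_approx :: "nat \<Rightarrow> (real \<Rightarrow> 'b \<Rightarrow> 'a::real_vector) \<Rightarrow> real \<Rightarrow> 'b \<Rightarrow> 'a" where
  "bernstein_approx N \<equiv> grid_combination (Bernstein N) N"

definition Bernstein_deriv :: "nat \<Rightarrow> nat \<Rightarrow> real \<Rightarrow> real" where
  "Bernstein_deriv n k x = of_nat (n choose k) *
     (of_nat k * x ^ (k - 1) * (1 - x) ^ (n - k) - of_nat (n - k) * x ^ k * (1 - x) ^ (n - k - 1))"

lemma has_real_derivative_Bernstein: "(Bernstein n k has_real_derivative Bernstein_deriv n k x) (at x)"
  unfolding Bernstein_def[abs_def] Bernstein_deriv_def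
  by (auto intro!: derivative_eq_intros simp: algebra_simps)

lemma continuous_on_Bernstein: "continuous_on A (Bernstein n k)"
  unfolding Bernstein_def[abs_def] by (intro continuous_intros)

lemma continuous_on_Bernstein_deriv: "continuous_on A (Bernstein_deriv n k)"
  unfolding Bernstein_deriv_def[abs_def] by (intro continuous_intros)

lemma Bernstein_deriv_weights_bounded: "\<exists>C. \<forall>t\<in>{0..1}. (\<Sum>k\<le>n. \<bar>Bernstein_deriv n k t\<bar>) \<le> C"
proof -
  have "bounded ((\<lambda>t. \<Sum>k\<le>n. \<bar>Bernstein_deriv n k t\<bar>) ` {0..1})"
    by (intro compact_imp_bounded compact_continuous_image compact_Icc continuous_intros continuous_on_Bernstein_deriv)
  then obtain C where C: "\<forall>t\<in>{0..1}. \<bar>\<Sum>k\<le>n. \<bar>Bernstein_deriv n k t\<bar>\<bar> \<le> C"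
    unfolding bounded_iff real_norm_def by (simp only: ball_simps) blast
  have "(\<Sum>k\<le>n. \<bar>Bernstein_deriv n k t\<bar>) \<le> C" if "t \<in> {0..1}" for t
    using C[rule_format, OF that] abs_ge_self order_trans by blast
  then show ?thesis by blast
qed

lemma sum_Bernstein_variance:
  assumes "0 < n"
  shows "(\<Sum>k\<le>n. (x - k/n)\<^sup>2 * Bernstein n k x) = x * (1 - x) / n"
proof -
  have *: "\<And>a b x::real. (a - b)\<^sup>2 * x = a * (a - 1) * x + (1 - 2 * b) * a * x + b * b * x"
    by (simp add: algebra_simps power2_eq_square)
  have "(\<Sum>k\<le>n. (k - n * x)\<^sup>2 * Bernstein n k x) = n * x * (1 - x)"
    by (simp add: * sum.distrib, simp flip: sum_distrib_left add: mult.assoc,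
        simp add: algebra_simps power2_eq_square)
  then have "(\<Sum>k\<le>n. (k - n * x)\<^sup>2 * Bernstein n k x) / n^2 = x * (1 - x) / n"
    by (simp add: power2_eq_square)
  then show ?thesis
    using assms by (simp add: sum_divide_distrib field_split_simps power2_commute)
qed

text \<open>Chebyshev's estimate behind the Bernstein proof of Weierstrass' theorem: nodes within \<open>d\<close>
  of \<open>x\<close> contribute at most \<open>\<epsilon>\<close>, the others are controlled by the variance.\<close>
lemma Bernstein_weighted_sum_le:
  fixes \<phi> :: "nat \<Rightarrow> real"
  assumes n: "0 < n" and x: "0 \<le> x" "x \<le> 1" and d: "d > 0" and \<epsilon>: "\<epsilon> \<ge> 0" and L: "L \<ge> 0"
    and far: "\<And>k. k \<le> n \<Longrightarrow> \<phi> k \<le> L"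
    and near: "\<And>k. k \<le> n \<Longrightarrow> \<bar>x - k/n\<bar> < d \<Longrightarrow> \<phi> k \<le> \<epsilon>"
  shows "(\<Sum>k\<le>n. Bernstein n k x * \<phi> k) \<le> \<epsilon> + L / (d\<^sup>2 * n)"
proof -
  have \<phi>_le: "\<phi> k \<le> \<epsilon> + (L / d\<^sup>2) * (x - k/n)\<^sup>2" if k: "k \<le> n" for k
  proof (cases "\<bar>x - k/n\<bar> < d")
    case True then show ?thesis using near[OF k] L by (simp add: add_increasing2)
  next
    case False
    then have "d\<^sup>2 \<le> (x - k/n)\<^sup>2" using d by (metis abs_le_square_iff abs_of_pos not_less)
    then have "L \<le> (L / d\<^sup>2) * (x - k/n)\<^sup>2" using L d by (simp add: field_simps mult_left_mono)
    then show ?thesis using far[OF k] \<epsilon> by linarith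
  qed
  have "(\<Sum>k\<le>n. Bernstein n k x * \<phi> k) \<le> (\<Sum>k\<le>n. Bernstein n k x * (\<epsilon> + (L / d\<^sup>2) * (x - k/n)\<^sup>2))"
    using \<phi>_le Bernstein_nonneg[OF x] by (intro sum_mono mult_left_mono) auto
  also have "\<dots> = \<epsilon> * (\<Sum>k\<le>n. Bernstein n k x) + (L / d\<^sup>2) * (\<Sum>k\<le>n. (x - k/n)\<^sup>2 * Bernstein n k x)"
    by (simp add: sum.distrib sum_distrib_left algebra_simps del: sum_Bernstein)
  also have "\<dots> = \<epsilon> + (L / d\<^sup>2) * (x * (1 - x) / n)"
    by (simp add: sum_Bernstein_variance[OF n])
  also have "\<dots> \<le> \<epsilon> + (L / d\<^sup>2) * (1 / n)"
    using x L n mult_left_le_one_le[of "1 - x" x]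
    by (intro add_left_mono mult_left_mono divide_right_mono) auto
  finally show ?thesis by simp
qed

lemma bernstein_combination_error:
  fixes W :: "nat \<Rightarrow> 'a::real_normed_vector"
  assumes N: "0 < N" and t: "0 \<le> t" "t \<le> 1" and d: "d > 0" and e: "e > 0" and M: "M \<ge> 0"
    and far: "\<And>k. k \<le> N \<Longrightarrow> norm (W k - w) \<le> 2 * M"
    and near: "\<And>k. k \<le> N \<Longrightarrow> \<bar>t - k/N\<bar> < d \<Longrightarrow> norm (W k - w) \<le> e/2"
    and large: "4 * M / (d\<^sup>2 * e) < N"
  shows "norm ((\<Sum>k\<le>N. Bernstein N k t *\<^sub>R W k) - w) \<le> e"
proof -
  have "(\<Sum>k\<le>N. Bernstein N k t *\<^sub>R W k) - w = (\<Sum>k\<le>N. Bernstein N k t *\<^sub>R (W k - w))"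
    by (simp add: scaleR_diff_right sum_subtractf flip: scaleR_sum_left)
  then have "norm ((\<Sum>k\<le>N. Bernstein N k t *\<^sub>R W k) - w) \<le> (\<Sum>k\<le>N. Bernstein N k t * norm (W k - w))"
    using Bernstein_nonneg[OF t] by (auto intro!: order_trans[OF norm_sum] sum_mono)
  also have "\<dots> \<le> e/2 + (2 * M) / (d\<^sup>2 * N)"
    by (rule Bernstein_weighted_sum_le[OF N t d]) (use e M far near in auto)
  also have "(2 * M) / (d\<^sup>2 * N) \<le> e/2"
    using large d e N by (simp add: field_simps)
  finally show ?thesis by simp
qed

lemma bernstein_positive_combination:
  assumes "t \<in> {0..1}" and "\<forall>k\<le>N. r k > 0"
  shows "(\<Sum>k\<le>N. Bernstein N k t * r k) > 0"
proof -
  obtain k where k: "k \<le> N" "Bernstein N k t \<noteq> 0"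
  proof (rule ccontr)
    assume "\<not> thesis"
    then have "(\<Sum>k\<le>N. Bernstein N k t) = 0" using that by (intro sum.neutral) auto
    then show False by simp
  qed
  have "Bernstein N j t \<ge> 0" for j using assms(1) Bernstein_nonneg by auto
  then show ?thesis
    using k assms(2) by (intro sum_pos2[of _ k]) (auto intro: mult_nonneg_nonneg less_imp_le
        simp: order.strict_iff_order)
qed

lemma grid_combination_C1_loop:
  assumes "\<forall>k\<le>N. C1_loop (H (real k / real N))"
  shows "C1_loop (grid_combination c N H t)"
    and "D (grid_combination c N H t) s = grid_combination c N (\<lambda>u. D (H u)) t s"
proof -
  have eq: "grid_combination c N H t = (\<lambda>s. \<Sum>k\<in>{..N}. c k t *\<^sub>R H (real k / real N) s)"
    by (simp add: fun_eq_iff grid_combination_def)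
  show "C1_loop (grid_combination c N H t)"
    unfolding eq using assms by (intro C1_loop_sum) auto
  show "D (grid_combination c N H t) s = grid_combination c N (\<lambda>u. D (H u)) t s"
    unfolding eq grid_combination_def using assms by (intro C1_loop_sum) auto
qed

lemma bernstein_approx_at_0: "bernstein_approx N H 0 s = H 0 s"
  by (simp add: grid_combination_def Bernstein_def sum.atMost_shift)

lemma bernstein_approx_at_1: "0 < N \<Longrightarrow> bernstein_approx N H 1 s = H 1 s"
proof -
  assume "0 < N"
  then have "bernstein_approx N H 1 s = (\<Sum>k\<le>N. (if k = N then H (real k / real N) s else 0))"
    unfolding grid_combination_def by (intro sum.cong) (auto simp: Bernstein_def)
  then show ?thesis using \<open>0 < N\<close> by simp
qed

lemma bernstein_approx_C1_uniform:
  fixes H :: "real \<Rightarrow> real \<Rightarrow> real \<Rightarrow> complex"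
  assumes HC: "C1_continuous_on ({0..1} \<times> {0..1}) (\<lambda>(z, t). H z t)"
    and HL: "\<forall>z\<in>{0..1}. \<forall>t\<in>{0..1}. C1_loop (H z t)" and e: "e > 0"
  shows "\<exists>N>0. \<forall>z\<in>{0..1}. \<forall>t\<in>{0..1}. C1_close e (bernstein_approx N (H z) t) (H z t)"
proof -
  have K: "compact ({0..1::real} \<times> {0..1::real})" by (intro compact_Times) auto
  have FL: "\<forall>p\<in>{0..1} \<times> {0..1}. C1_loop ((\<lambda>(z, t). H z t) p)" using HL by auto
  obtain M0 where M0: "\<forall>p\<in>{0..1} \<times> {0..1}. \<forall>s. cmod ((\<lambda>(z, t). H z t) p s) \<le> M0
      \<and> cmod (D ((\<lambda>(z, t). H z t) p) s) \<le> M0"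
    using C1_continuous_on_compact_bounded[OF K HC FL] by blast
  define M where "M = max M0 0"
  have M: "M \<ge> 0" "\<And>z t s. z \<in> {0..1} \<Longrightarrow> t \<in> {0..1} \<Longrightarrow> cmod (H z t s) \<le> M \<and> cmod (D (H z t) s) \<le> M"
    using M0 unfolding M_def by (force intro: le_max_iff_disj[THEN iffD2])+
  obtain d where d: "d > 0" "\<forall>p\<in>{0..1} \<times> {0..1}. \<forall>q\<in>{0..1} \<times> {0..1}. dist p q < d
      \<longrightarrow> C1_close (e/2) ((\<lambda>(z, t). H z t) p) ((\<lambda>(z, t). H z t) q)"
    using C1_continuous_on_compact_uniform[OF K HC FL, of "e/2"] e by auto
  define N where "N = Suc (nat \<lceil>4 * M / (d\<^sup>2 * e)\<rceil>)"
  have N: "0 < N" "4 * M / (d\<^sup>2 * e) < N" unfolding N_def by linarith+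
  have "C1_close e (bernstein_approx N (H z) t) (H z t)" if z: "z \<in> {0..1}" and t: "t \<in> {0..1}" for z t
    unfolding C1_close_def
  proof
    fix s :: real
    have node: "real k / real N \<in> {0..1}" if "k \<le> N" for k using that N(1) by auto
    then have "\<forall>k\<le>N. C1_loop (H z (real k / real N))" using HL z by blast
    note D_eq = grid_combination_C1_loop(2)[OF this]
    have near: "C1_close (e/2) (H z (real k / real N)) (H z t)" if "k \<le> N" "\<bar>t - k/N\<bar> < d" for k
      using d(2) z t node[OF that(1)] that(2) by (force simp: dist_Pair_Pair dist_real_def abs_minus_commute)
    have far: "cmod (H z (real k / real N) s - H z t s) \<le> 2 * M
        \<and> cmod (D (H z (real k / real N)) s - D (H z t) s) \<le> 2 * M" if "k \<le> N" for k
      using M(2)[OF z node[OF that], of s] M(2)[OF z t, of s] by (smt (verit) norm_triangle_ineq4)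
    show "cmod (bernstein_approx N (H z) t s - H z t s) \<le> e
        \<and> cmod (D (bernstein_approx N (H z) t) s - D (H z t) s) \<le> e"
      unfolding D_eq grid_combination_def using near far t
      by (intro conjI bernstein_combination_error[OF N(1) _ _ d(1) e M(1) _ _ N(2)])
        (auto simp: C1_close_def)
  qed
  then show ?thesis using N(1) by blast
qed

lemma has_derivative_scaleR_product_loop:
  assumes \<phi>: "(\<phi> has_real_derivative \<phi>') (at t)" and G: "C1_loop G"
  shows "((\<lambda>p. \<phi> (fst p) *\<^sub>R G (snd p)) has_derivative
     (\<lambda>q. fst q *\<^sub>R (\<phi>' *\<^sub>R G s) + snd q *\<^sub>R (\<phi> t *\<^sub>R D G s))) (at (t, s) within S)"
proof -
  have "((\<lambda>p. \<phi> (fst p)) has_derivative (\<lambda>q. \<phi>' * fst q)) (at (t, s) within S)"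
    using has_derivative_compose[of fst fst "(t, s)" S \<phi> "(*) \<phi>'"]
      has_derivative_fst[OF has_derivative_ident] \<phi>[unfolded has_field_derivative_def] by simp blast
  moreover have "((\<lambda>p. G (snd p)) has_derivative (\<lambda>q. snd q *\<^sub>R D G s)) (at (t, s) within S)"
    using has_derivative_compose[of snd snd "(t, s)" S G "\<lambda>x. x *\<^sub>R D G s"]
      has_derivative_snd[OF has_derivative_ident]
      C1_loop_has_vector_derivative[OF G, of s, unfolded has_vector_derivative_def] by simp blast
  ultimately show ?thesis
    by (rule has_derivative_eq_rhs[OF has_derivative_scaleR]) (auto simp: algebra_simps)
qed

lemma grid_combination_has_derivative:
  assumes c: "\<And>k. (c k has_real_derivative c' k t) (at t)" and H: "\<forall>k\<le>N. C1_loop (H (real k / real N))"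
  shows "((\<lambda>(t, s). grid_combination c N H t s) has_derivative
     (\<lambda>(x, y). x *\<^sub>R grid_combination c' N H t s + y *\<^sub>R grid_combination c N (\<lambda>u. D (H u)) t s))
     (at (t, s) within S)"
proof -
  have eq: "(\<lambda>(t, s). grid_combination c N H t s) = (\<lambda>p. \<Sum>k\<le>N. c k (fst p) *\<^sub>R H (real k / real N) (snd p))"
    by (auto simp: fun_eq_iff grid_combination_def)
  have "((\<lambda>p. \<Sum>k\<le>N. c k (fst p) *\<^sub>R H (real k / real N) (snd p)) has_derivative
     (\<lambda>q. \<Sum>k\<le>N. fst q *\<^sub>R (c' k t *\<^sub>R H (real k / real N) s) + snd q *\<^sub>R (c k t *\<^sub>R D (H (real k / real N)) s)))
     (at (t, s) within S)"
    using H by (intro has_derivative_sum has_derivative_scaleR_product_loop c) auto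
  then show ?thesis unfolding eq
    by (rule has_derivative_eq_rhs)
      (auto simp: fun_eq_iff grid_combination_def sum.distrib scaleR_sum_right)
qed

lemma grid_combination_continuous_on:
  fixes H :: "real \<Rightarrow> 'b::topological_space \<Rightarrow> 'a::real_normed_vector"
  assumes "\<And>k. continuous_on UNIV (c k)" and "\<forall>k\<le>N. continuous_on UNIV (H (real k / real N))"
  shows "continuous_on S (\<lambda>p. grid_combination c N H (fst p) (snd p))"
proof -
  have "continuous_on S (\<lambda>p. c k (fst p))" for k
    by (rule continuous_on_compose2[OF assms(1)]) (auto intro: continuous_intros)
  moreover have "continuous_on S (\<lambda>p. H (real k / real N) (snd p))" if "k \<le> N" for k
    by (rule continuous_on_compose2[of UNIV]) (use assms(2) that in \<open>auto intro: continuous_intros\<close>)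
  ultimately show ?thesis unfolding grid_combination_def by (intro continuous_on_sum continuous_on_scaleR) auto
qed

lemma norm_grid_combination_le:
  fixes H :: "real \<Rightarrow> 'b \<Rightarrow> 'a::real_normed_vector"
  assumes "\<forall>k\<le>N. norm (H (real k / real N) s) \<le> M"
  shows "norm (grid_combination c N H t s) \<le> (\<Sum>k\<le>N. \<bar>c k t\<bar>) * M"
proof -
  have "norm (grid_combination c N H t s) \<le> (\<Sum>k\<le>N. \<bar>c k t\<bar> * norm (H (real k / real N) s))"
    unfolding grid_combination_def by (rule order_trans[OF norm_sum]) simp
  also have "\<dots> \<le> (\<Sum>k\<le>N. \<bar>c k t\<bar> * M)" using assms by (intro sum_mono mult_left_mono) auto
  finally show ?thesis by (simp add: sum_distrib_right)
qed

lemma grid_combination_diff: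
  "grid_combination c N F t s - grid_combination c N G t s = grid_combination c N (\<lambda>u s. F u s - G u s) t s"
  by (simp add: grid_combination_def scaleR_diff_right sum_subtractf)

lemma C1_with_derivs_restrict:
  assumes C: "C1_with_derivs ({0..1} \<times> UNIV) (\<lambda>(t, s). \<gamma> t s) Ft Fs" and t: "t \<in> {0..1}"
    and g: "(g has_derivative g') (at x within A)" and gx: "g x = (t, s)" and gA: "g ` A \<subseteq> {0..1} \<times> UNIV"
  shows "((\<lambda>x. (\<lambda>(t, s). \<gamma> t s) (g x)) has_derivative (\<lambda>h. (\<lambda>(a, b). a *\<^sub>R Ft (t, s) + b *\<^sub>R Fs (t, s)) (g' h)))
    (at x within A)"
proof -
  have "((\<lambda>(t, s). \<gamma> t s) has_derivative (\<lambda>(a, b). a *\<^sub>R Ft (t, s) + b *\<^sub>R Fs (t, s)))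
      (at (t, s) within {0..1} \<times> UNIV)"
    using C t unfolding C1_with_derivs_def by auto
  then have "((\<lambda>(t, s). \<gamma> t s) has_derivative (\<lambda>(a, b). a *\<^sub>R Ft (t, s) + b *\<^sub>R Fs (t, s)))
      (at (g x) within g ` A)"
    unfolding gx by (rule has_derivative_subset) (rule gA)
  from diff_chain_within[OF g this] show ?thesis by (simp add: o_def)
qed

lemma C1_with_derivs_partial_s:
  assumes C: "C1_with_derivs ({0..1} \<times> UNIV) (\<lambda>(t, s). \<gamma> t s) Ft Fs" and t: "t \<in> {0..1}"
  shows "(\<gamma> t has_vector_derivative Fs (t, s)) (at s)"
proof -
  have "((\<lambda>s. (t, s)) has_derivative (\<lambda>y. (0, y))) (at s)" by (auto intro!: derivative_eq_intros)
  from C1_with_derivs_restrict[OF C t this refl]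
  show ?thesis using t by (simp add: has_vector_derivative_def image_subset_iff)
qed

lemma C1_with_derivs_partial_t:
  assumes C: "C1_with_derivs ({0..1} \<times> UNIV) (\<lambda>(t, s). \<gamma> t s) Ft Fs" and t: "t \<in> {0..1}"
  shows "((\<lambda>t'. \<gamma> t' s) has_vector_derivative Ft (t, s)) (at t within {0..1})"
proof -
  have "((\<lambda>t. (t, s)) has_derivative (\<lambda>y. (y, 0))) (at t within {0..1})" by (auto intro!: derivative_eq_intros)
  from C1_with_derivs_restrict[OF C t this refl]
  show ?thesis by (simp add: has_vector_derivative_def image_subset_iff)
qed

lemma periodic_continuous_on_bounded:
  fixes F :: "real \<times> real \<Rightarrow> 'a::real_normed_vector"
  assumes cont: "continuous_on ({0..1} \<times> UNIV) F" and per: "\<And>t s. t \<in> {0..1} \<Longrightarrow> F (t, s + 1) = F (t, s)"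
  shows "\<exists>M. \<forall>p\<in>{0..1} \<times> UNIV. norm (F p) \<le> M"
proof -
  have "bounded (F ` ({0..1} \<times> {0..1}))"
    by (intro compact_imp_bounded compact_continuous_image continuous_on_subset[OF cont]
        compact_Times compact_Icc) auto
  then obtain M where M: "\<forall>p\<in>{0..1} \<times> {0..1}. norm (F p) \<le> M"
    unfolding bounded_iff by (simp only: ball_simps) blast
  have "F (t, frac s) = F (t, s)" if "t \<in> {0..1}" for t s
    using periodic_frac_eq[of "\<lambda>s. F (t, s)"] per[OF that] by blast
  then have "norm (F (t, s)) \<le> M" if "t \<in> {0..1}" for t s
    using M[rule_format, of "(t, frac s)"] that frac_in_unit_interval by force
  then show ?thesis by (intro exI[of _ M]) auto
qed

lemma C1_with_derivs_loops_bounded: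
  assumes C: "C1_with_derivs ({0..1} \<times> UNIV) (\<lambda>(t, s). \<gamma> t s) Ft Fs"
    and L: "\<forall>t\<in>{0..1}. C1_loop (\<gamma> t)"
  shows "\<exists>M. \<forall>p\<in>{0..1} \<times> UNIV. cmod (\<gamma> (fst p) (snd p)) \<le> M \<and> cmod (Ft p) \<le> M \<and> cmod (Fs p) \<le> M"
proof -
  have "continuous_on ({0..1} \<times> UNIV) (\<lambda>(t, s). \<gamma> t s)"
    using C unfolding C1_with_derivs_def
    by (intro has_derivative_continuous_on[where f'="\<lambda>p (a, b). a *\<^sub>R Ft p + b *\<^sub>R Fs p"]) blast
  moreover have "(\<lambda>(t, s). \<gamma> t s) (t, s + 1) = (\<lambda>(t, s). \<gamma> t s) (t, s)" if "t \<in> {0..1}" for t s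
    using L C1_loop_periodic that by simp
  ultimately obtain M1 where M1: "\<forall>p\<in>{0..1} \<times> UNIV. cmod ((\<lambda>(t, s). \<gamma> t s) p) \<le> M1"
    by (metis periodic_continuous_on_bounded)
  have "Ft (t, s + 1) = Ft (t, s)" if t: "t \<in> {0..1}" for t s
  proof -
    have "((\<lambda>t'. \<gamma> t' (s + 1)) has_vector_derivative Ft (t, s)) (at t within {0..1})"
      by (rule has_vector_derivative_transform[OF t _ C1_with_derivs_partial_t[OF C t]])
        (use L C1_loop_periodic in blast)
    then show ?thesis
      using C1_with_derivs_partial_t[OF C t, of "s + 1"] t
      by (intro vector_derivative_unique_within_closed_interval[of 0 1 t]) (auto simp: cbox_interval)
  qed
  moreover have "continuous_on ({0..1} \<times> UNIV) Ft" using C unfolding C1_with_derivs_def by blast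
  ultimately obtain M2 where M2: "\<forall>p\<in>{0..1} \<times> UNIV. cmod (Ft p) \<le> M2"
    by (metis periodic_continuous_on_bounded)
  have "Fs (t, s) = D (\<gamma> t) s" if "t \<in> {0..1}" for t s
    using vector_derivative_at[OF C1_with_derivs_partial_s[OF C that, of s]] by simp
  then have "Fs (t, s + 1) = Fs (t, s)" if "t \<in> {0..1}" for t s
    using that L C1_loop_deriv_periodic by auto
  moreover have "continuous_on ({0..1} \<times> UNIV) Fs" using C unfolding C1_with_derivs_def by blast
  ultimately obtain M3 where M3: "\<forall>p\<in>{0..1} \<times> UNIV. cmod (Fs p) \<le> M3"
    by (metis periodic_continuous_on_bounded)
  show ?thesis
    using M1 M2 M3 by (intro exI[of _ "max M1 (max M2 M3)"]) (force simp: le_max_iff_disj)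
qed

section \<open>The smoothing homotopy\<close>

lemma continuous_on_interval_combination:
  fixes u :: "'p \<Rightarrow> 'a::real_normed_vector" and V :: "real \<Rightarrow> 'p \<Rightarrow> 'a" and a b :: "real \<Rightarrow> real"
  assumes a: "continuous_on {0..1} a" "\<forall>z\<in>{0..1}. a z \<in> {0..1}"
    and b: "continuous_on {0..1} b" "\<forall>z\<in>{0..1}. b z \<in> {0..1}"
    and u_bound: "\<forall>p\<in>S. norm (u p) \<le> Mu" and V_bound: "\<forall>w\<in>{0..1}. \<forall>p\<in>S. norm (V w p) \<le> MV"
    and V_equi: "\<forall>e>0. \<exists>d>0. \<forall>w\<in>{0..1}. \<forall>w'\<in>{0..1}. \<bar>w - w'\<bar> < d \<longrightarrow> (\<forall>p\<in>S. norm (V w p - V w' p) \<le> e)"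
    and z: "z \<in> {0..1}" and e: "e > 0"
  shows "\<exists>d>0. \<forall>z'\<in>{0..1}. \<bar>z' - z\<bar> < d \<longrightarrow> (\<forall>p\<in>S.
     norm (((1 - a z') *\<^sub>R u p + a z' *\<^sub>R V (b z') p) - ((1 - a z) *\<^sub>R u p + a z *\<^sub>R V (b z) p)) \<le> e)"
proof -
  define K where "K = max Mu 0 + max MV 0 + 1"
  have K: "K > 0" unfolding K_def by (intro add_nonneg_pos add_nonneg_nonneg) auto
  have uV: "norm (u p - V w p) \<le> K" if "p \<in> S" "w \<in> {0..1}" for p w
  proof -
    have "norm (u p) \<le> max Mu 0" "norm (V w p) \<le> max MV 0"
      using u_bound V_bound that by (auto simp: le_max_iff_disj)
    then show ?thesis using norm_triangle_ineq4[of "u p" "V w p"] unfolding K_def by linarith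
  qed
  obtain d1 where d1: "d1 > 0" "\<forall>w\<in>{0..1}. \<forall>w'\<in>{0..1}. \<bar>w - w'\<bar> < d1 \<longrightarrow> (\<forall>p\<in>S. norm (V w p - V w' p) \<le> e/2)"
    using V_equi e half_gt_zero by blast
  obtain db where db: "db > 0" "\<forall>z'\<in>{0..1}. dist z' z < db \<longrightarrow> dist (b z') (b z) < d1"
    using b(1) z d1(1) unfolding continuous_on_iff by blast
  have "e / (2 * K) > 0" using e K by simp
  then obtain da where da: "da > 0" "\<forall>z'\<in>{0..1}. dist z' z < da \<longrightarrow> dist (a z') (a z) < e / (2 * K)"
    using a(1) z unfolding continuous_on_iff by blast
  have "norm (((1 - a z') *\<^sub>R u p + a z' *\<^sub>R V (b z') p) - ((1 - a z) *\<^sub>R u p + a z *\<^sub>R V (b z) p)) \<le> e"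
    if z': "z' \<in> {0..1}" "\<bar>z' - z\<bar> < min da db" and p: "p \<in> S" for z' p
  proof -
    have "\<bar>a z - a z'\<bar> \<le> e / (2 * K)" using da(2) z' by (force simp: dist_real_def abs_minus_commute)
    then have "norm ((a z - a z') *\<^sub>R (u p - V (b z') p)) \<le> e / (2 * K) * K"
      unfolding norm_scaleR using uV[OF p] b(2) z' e K by (intro mult_mono) auto
    also have "\<dots> = e/2" using K by simp
    finally have 1: "norm ((a z - a z') *\<^sub>R (u p - V (b z') p)) \<le> e/2" .
    have "\<bar>b z' - b z\<bar> < d1" using db(2) z' by (force simp: dist_real_def)
    then have "norm (V (b z') p - V (b z) p) \<le> e/2" using d1(2) b(2) z z' p by blast
    moreover have "\<bar>a z\<bar> \<le> 1" using a(2) z by auto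
    ultimately have 2: "norm (a z *\<^sub>R (V (b z') p - V (b z) p)) \<le> e/2"
      unfolding norm_scaleR by (metis abs_ge_zero mult_left_le_one_le norm_ge_zero order.trans)
    have "((1 - a z') *\<^sub>R u p + a z' *\<^sub>R V (b z') p) - ((1 - a z) *\<^sub>R u p + a z *\<^sub>R V (b z) p)
        = (a z - a z') *\<^sub>R (u p - V (b z') p) + a z *\<^sub>R (V (b z') p - V (b z) p)"
      by (simp add: algebra_simps)
    then show ?thesis using norm_triangle_le[OF add_mono[OF 1 2]] by simp
  qed
  then show ?thesis using da db by (intro exI[of _ "min da db"]) auto
qed

lemma grid_combination_equicontinuous:
  fixes X :: "real \<Rightarrow> real \<Rightarrow> 'b \<Rightarrow> 'a::real_normed_vector"
  assumes C: "\<forall>t\<in>T. (\<Sum>k\<le>N. \<bar>c k t\<bar>) \<le> C"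
    and X: "\<forall>e>0. \<exists>d>0. \<forall>w\<in>W. \<forall>w'\<in>W. \<bar>w - w'\<bar> < d \<longrightarrow>
              (\<forall>k\<le>N. \<forall>s. norm (X w (real k / real N) s - X w' (real k / real N) s) \<le> e)"
  shows "\<forall>e>0. \<exists>d>0. \<forall>w\<in>W. \<forall>w'\<in>W. \<bar>w - w'\<bar> < d \<longrightarrow>
           (\<forall>t\<in>T. \<forall>s. norm (grid_combination c N (X w) t s - grid_combination c N (X w') t s) \<le> e)"
proof (intro allI impI)
  fix e :: real assume e: "e > 0"
  define C' where "C' = max C 1"
  have "e / C' > 0" using e by (simp add: C'_def)
  then obtain d where d: "d > 0" "\<forall>w\<in>W. \<forall>w'\<in>W. \<bar>w - w'\<bar> < d \<longrightarrow>
      (\<forall>k\<le>N. \<forall>s. norm (X w (real k / real N) s - X w' (real k / real N) s) \<le> e / C')"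
    using X by blast
  have "norm (grid_combination c N (X w) t s - grid_combination c N (X w') t s) \<le> e"
    if "w \<in> W" "w' \<in> W" "\<bar>w - w'\<bar> < d" "t \<in> T" for w w' t s
  proof -
    have "norm (grid_combination c N (X w) t s - grid_combination c N (X w') t s) \<le> (\<Sum>k\<le>N. \<bar>c k t\<bar>) * (e / C')"
      unfolding grid_combination_diff by (rule norm_grid_combination_le) (use d(2) that in auto)
    also have "\<dots> \<le> C' * (e / C')"
      using C that e unfolding C'_def by (intro mult_right_mono) auto
    finally show ?thesis unfolding C'_def by simp
  qed
  then show "\<exists>d>0. \<forall>w\<in>W. \<forall>w'\<in>W. \<bar>w - w'\<bar> < d \<longrightarrow>
      (\<forall>t\<in>T. \<forall>s. norm (grid_combination c N (X w) t s - grid_combination c N (X w') t s) \<le> e)"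
    using d(1) by blast
qed

lemma grid_interval_combination_continuous:
  fixes u :: "real \<times> real \<Rightarrow> complex" and X :: "real \<Rightarrow> real \<Rightarrow> real \<Rightarrow> complex"
    and a b :: "real \<Rightarrow> real"
  assumes a: "continuous_on {0..1} a" "\<forall>z\<in>{0..1}. a z \<in> {0..1}"
    and b: "continuous_on {0..1} b" "\<forall>z\<in>{0..1}. b z \<in> {0..1}"
    and u_bound: "\<forall>p\<in>{0..1} \<times> UNIV. cmod (u p) \<le> Mu"
    and weights: "\<forall>t\<in>{0..1}. (\<Sum>k\<le>N. \<bar>c k t\<bar>) \<le> C"
    and X_bound: "\<forall>w\<in>{0..1}. \<forall>v\<in>{0..1}. \<forall>s. cmod (X w v s) \<le> M"
    and X_equi: "\<forall>e>0. \<exists>d>0. \<forall>w\<in>{0..1}. \<forall>w'\<in>{0..1}. \<bar>w - w'\<bar> < d \<longrightarrow>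
                   (\<forall>v\<in>{0..1}. \<forall>s. cmod (X w v s - X w' v s) \<le> e)"
    and z: "z \<in> {0..1}" and e: "e > 0"
  shows "\<exists>d>0. \<forall>z'\<in>{0..1}. \<bar>z' - z\<bar> < d \<longrightarrow> (\<forall>p\<in>{0..1} \<times> UNIV.
     cmod (((1 - a z') *\<^sub>R u p + a z' *\<^sub>R grid_combination c N (X (b z')) (fst p) (snd p))
         - ((1 - a z) *\<^sub>R u p + a z *\<^sub>R grid_combination c N (X (b z)) (fst p) (snd p))) \<le> e)"
proof -
  have node: "real k / real N \<in> {0..1}" if "k \<le> N" for k using that by (cases "N = 0") auto
  have V_bound: "\<forall>w\<in>{0..1}. \<forall>p\<in>{0..1} \<times> UNIV. cmod (grid_combination c N (X w) (fst p) (snd p)) \<le> C * max M 0"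
  proof (intro ballI)
    fix w :: real and p :: "real \<times> real" assume w: "w \<in> {0..1}" and p: "p \<in> {0..1} \<times> UNIV"
    then have "cmod (grid_combination c N (X w) (fst p) (snd p)) \<le> (\<Sum>k\<le>N. \<bar>c k (fst p)\<bar>) * max M 0"
      using X_bound node by (intro norm_grid_combination_le) (auto simp: le_max_iff_disj)
    also have "\<dots> \<le> C * max M 0" using weights p by (intro mult_right_mono) auto
    finally show "cmod (grid_combination c N (X w) (fst p) (snd p)) \<le> C * max M 0" .
  qed
  have "\<forall>e>0. \<exists>d>0. \<forall>w\<in>{0..1}. \<forall>w'\<in>{0..1}. \<bar>w - w'\<bar> < d \<longrightarrow>
      (\<forall>k\<le>N. \<forall>s. cmod (X w (real k / real N) s - X w' (real k / real N) s) \<le> e)"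
  proof (intro allI impI)
    fix e :: real assume "e > 0"
    with X_equi obtain d where "d > 0" and d: "\<forall>w\<in>{0..1}. \<forall>w'\<in>{0..1}. \<bar>w - w'\<bar> < d \<longrightarrow>
        (\<forall>v\<in>{0..1}. \<forall>s. cmod (X w v s - X w' v s) \<le> e)" by blast
    then show "\<exists>d>0. \<forall>w\<in>{0..1}. \<forall>w'\<in>{0..1}. \<bar>w - w'\<bar> < d \<longrightarrow>
        (\<forall>k\<le>N. \<forall>s. cmod (X w (real k / real N) s - X w' (real k / real N) s) \<le> e)"
      using node by (intro exI[of _ d]) auto
  qed
  from grid_combination_equicontinuous[OF weights this]
  have V_equi: "\<forall>e>0. \<exists>d>0. \<forall>w\<in>{0..1}. \<forall>w'\<in>{0..1}. \<bar>w - w'\<bar> < d \<longrightarrow> (\<forall>p\<in>{0..1} \<times> UNIV.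
      cmod (grid_combination c N (X w) (fst p) (snd p) - grid_combination c N (X w') (fst p) (snd p)) \<le> e)"
    by (simp add: mem_Times_iff)
  show ?thesis
    by (rule continuous_on_interval_combination[where V="\<lambda>w p. grid_combination c N (X w) (fst p) (snd p)",
          OF a b u_bound V_bound V_equi z e])
qed

definition first_ramp :: "real \<Rightarrow> real" where
  "first_ramp z = min 1 (2 * z)"

definition second_ramp :: "real \<Rightarrow> real" where
  "second_ramp z = max 0 (2 * z - 1)"

lemma ramps_in_unit_interval: "z \<in> {0..1} \<Longrightarrow> first_ramp z \<in> {0..1} \<and> second_ramp z \<in> {0..1}"
  by (auto simp: first_ramp_def second_ramp_def)

lemma second_ramp_eq_0: "first_ramp z < 1 \<Longrightarrow> second_ramp z = 0"
  by (simp add: first_ramp_def second_ramp_def)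

lemma ramp_values [simp]: "first_ramp 0 = 0" "first_ramp 1 = 1" "second_ramp 1 = 1"
  by (simp_all add: first_ramp_def second_ramp_def)

lemma continuous_on_ramps: "continuous_on A first_ramp" "continuous_on A second_ramp"
  unfolding first_ramp_def[abs_def] second_ramp_def[abs_def] by (intro continuous_intros)+

text \<open>On the first half of the \<open>z\<close>-interval \<open>\<gamma>\<close> is deformed linearly into its Bernstein smoothing;
  on the second half the Bernstein smoothing of \<open>H w\<close> follows \<open>w\<close> from \<open>0\<close> to \<open>1\<close>.\<close>
definition smoothing ::
    "nat \<Rightarrow> (real \<Rightarrow> real \<Rightarrow> complex) \<Rightarrow> (real \<Rightarrow> real \<Rightarrow> real \<Rightarrow> complex) \<Rightarrow> real \<Rightarrow> real \<Rightarrow> real \<Rightarrow> complex" where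
  "smoothing N \<gamma> H z t s =
     (1 - first_ramp z) *\<^sub>R \<gamma> t s + first_ramp z *\<^sub>R bernstein_approx N (H (second_ramp z)) t s"

definition smoothing_dt ::
    "nat \<Rightarrow> (real \<times> real \<Rightarrow> complex) \<Rightarrow> (real \<Rightarrow> real \<Rightarrow> real \<Rightarrow> complex) \<Rightarrow> real \<Rightarrow> real \<times> real \<Rightarrow> complex" where
  "smoothing_dt N Ft H z p = (1 - first_ramp z) *\<^sub>R Ft p
     + first_ramp z *\<^sub>R grid_combination (Bernstein_deriv N) N (H (second_ramp z)) (fst p) (snd p)"

definition smoothing_ds ::
    "nat \<Rightarrow> (real \<times> real \<Rightarrow> complex) \<Rightarrow> (real \<Rightarrow> real \<Rightarrow> real \<Rightarrow> complex) \<Rightarrow> real \<Rightarrow> real \<times> real \<Rightarrow> complex" where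
  "smoothing_ds N Fs H z p = (1 - first_ramp z) *\<^sub>R Fs p
     + first_ramp z *\<^sub>R bernstein_approx N (\<lambda>u. D (H (second_ramp z) u)) (fst p) (snd p)"

lemma smoothing_at_0: "smoothing N \<gamma> H 0 t = \<gamma> t"
  by (simp add: fun_eq_iff smoothing_def)

locale smoothing_setup =
  fixes N :: nat and \<gamma> :: "real \<Rightarrow> real \<Rightarrow> complex" and Ft Fs :: "real \<times> real \<Rightarrow> complex"
    and H :: "real \<Rightarrow> real \<Rightarrow> real \<Rightarrow> complex"
  assumes N_pos: "0 < N"
    and \<gamma>_C1: "C1_with_derivs ({0..1} \<times> UNIV) (\<lambda>(t, s). \<gamma> t s) Ft Fs"
    and \<gamma>_loop: "\<forall>t\<in>{0..1}. C1_loop (\<gamma> t)"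
    and H_cont: "C1_continuous_on ({0..1} \<times> {0..1}) (\<lambda>(z, t). H z t)"
    and H_loop: "\<forall>z\<in>{0..1}. \<forall>t\<in>{0..1}. C1_loop (H z t)"
    and H_start: "\<forall>t\<in>{0..1}. H 0 t = \<gamma> t"
begin

lemma node_loops: "w \<in> {0..1} \<Longrightarrow> \<forall>k\<le>N. C1_loop (H w (real k / real N))"
  using H_loop N_pos by auto

lemma smoothing_eq:
  assumes "z \<in> {0..1}" "t \<in> {0..1}"
  shows "smoothing N \<gamma> H z t = (\<lambda>s. (1 - first_ramp z) *\<^sub>R H (second_ramp z) t s
      + first_ramp z *\<^sub>R bernstein_approx N (H (second_ramp z)) t s)"
proof (cases "first_ramp z < 1")
  case True then show ?thesis using H_start assms(2) by (simp add: fun_eq_iff smoothing_def second_ramp_eq_0)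
next
  case False
  then have "first_ramp z = 1" using ramps_in_unit_interval[OF assms(1)] by simp
  then show ?thesis by (simp add: fun_eq_iff smoothing_def)
qed

lemma smoothing_C1_loop:
  assumes z: "z \<in> {0..1}" and t: "t \<in> {0..1}"
  shows "C1_loop (smoothing N \<gamma> H z t)"
    and "D (smoothing N \<gamma> H z t) s = (1 - first_ramp z) *\<^sub>R D (H (second_ramp z) t) s
      + first_ramp z *\<^sub>R bernstein_approx N (\<lambda>u. D (H (second_ramp z) u)) t s"
proof -
  have w: "second_ramp z \<in> {0..1}" using ramps_in_unit_interval[OF z] by blast
  have Hwt: "C1_loop (H (second_ramp z) t)" using H_loop w t by blast
  note B = grid_combination_C1_loop[OF node_loops[OF w], of "Bernstein N" t]
  show "C1_loop (smoothing N \<gamma> H z t)"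
    unfolding smoothing_eq[OF z t] by (rule C1_loop_combination(1)[OF Hwt B(1)])
  show "D (smoothing N \<gamma> H z t) s = (1 - first_ramp z) *\<^sub>R D (H (second_ramp z) t) s
      + first_ramp z *\<^sub>R bernstein_approx N (\<lambda>u. D (H (second_ramp z) u)) t s"
    unfolding smoothing_eq[OF z t] by (simp only: C1_loop_combination(2)[OF Hwt B(1)] B(2))
qed

lemma smoothing_C1_close:
  assumes approx: "\<forall>w\<in>{0..1}. \<forall>t\<in>{0..1}. C1_close e (bernstein_approx N (H w) t) (H w t)"
    and z: "z \<in> {0..1}" and t: "t \<in> {0..1}"
  shows "C1_close e (smoothing N \<gamma> H z t) (H (second_ramp z) t)"
  unfolding C1_close_def
proof
  fix s
  define a w where "a = first_ramp z" and "w = second_ramp z"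
  have a: "\<bar>a\<bar> \<le> 1" and w: "w \<in> {0..1}" using ramps_in_unit_interval[OF z] by (auto simp: a_def w_def)
  have "smoothing N \<gamma> H z t s - H w t s = a *\<^sub>R (bernstein_approx N (H w) t s - H w t s)"
    "D (smoothing N \<gamma> H z t) s - D (H w t) s = a *\<^sub>R (D (bernstein_approx N (H w) t) s - D (H w t) s)"
    unfolding smoothing_C1_loop(2)[OF z t] grid_combination_C1_loop(2)[OF node_loops[OF w]]
    unfolding smoothing_eq[OF z t] a_def w_def
    by (simp_all add: algebra_simps)
  moreover have "cmod (bernstein_approx N (H w) t s - H w t s) \<le> e"
    "cmod (D (bernstein_approx N (H w) t) s - D (H w t) s) \<le> e"
    using approx w t unfolding C1_close_def by auto
  ultimately show "cmod (smoothing N \<gamma> H z t s - H w t s) \<le> e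
      \<and> cmod (D (smoothing N \<gamma> H z t) s - D (H w t) s) \<le> e"
    using a by (auto intro: order_trans[OF mult_left_le_one_le])
qed

lemma smoothing_deriv_0_positive:
  assumes pos: "\<forall>w\<in>{0..1}. \<forall>t\<in>{0..1}. \<exists>c>0. D (H w t) 0 = of_real c"
    and z: "z \<in> {0..1}" and t: "t \<in> {0..1}"
  shows "\<exists>c>0. D (smoothing N \<gamma> H z t) 0 = of_real c"
proof -
  define a w where "a = first_ramp z" and "w = second_ramp z"
  have a: "0 \<le> a" "a \<le> 1" and w: "w \<in> {0..1}" using ramps_in_unit_interval[OF z] by (auto simp: a_def w_def)
  define r where "r u = Re (D (H w u) 0)" for u
  have r: "D (H w u) 0 = of_real (r u)" "r u > 0" if "u \<in> {0..1}" for u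
    using pos w that unfolding r_def by force+
  have node: "real k / real N \<in> {0..1}" if "k \<le> N" for k using that N_pos by auto
  define c where "c = (1 - a) * r t + a * (\<Sum>k\<le>N. Bernstein N k t * r (real k / real N))"
  have "D (smoothing N \<gamma> H z t) 0 = of_real c"
    unfolding smoothing_C1_loop(2)[OF z t] grid_combination_def c_def a_def[symmetric] w_def[symmetric]
    using r(1)[OF t] r(1)[OF node] by (simp add: scaleR_conv_of_real)
  moreover have "(\<Sum>k\<le>N. Bernstein N k t * r (real k / real N)) > 0"
    using t r(2)[OF node] by (intro bernstein_positive_combination) auto
  then have "c > 0"
    using a r(2)[OF t] unfolding c_def
    by (cases "a = 1") (auto intro: add_pos_nonneg mult_nonneg_nonneg)
  ultimately show ?thesis by blast
qed

lemma smoothing_sides_embedding: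
  assumes "\<forall>z\<in>{0..1}. embedding_loop (H z 0) \<and> embedding_loop (H z 1)" and z: "z \<in> {0..1}"
  shows "embedding_loop (smoothing N \<gamma> H z 0) \<and> embedding_loop (smoothing N \<gamma> H z 1)"
proof -
  have "smoothing N \<gamma> H z 0 = H (second_ramp z) 0" "smoothing N \<gamma> H z 1 = H (second_ramp z) 1"
    using smoothing_eq[OF z, of 0] smoothing_eq[OF z, of 1] N_pos
    by (auto simp: fun_eq_iff bernstein_approx_at_0 bernstein_approx_at_1 algebra_simps)
  then show ?thesis using assms ramps_in_unit_interval[OF z] by simp
qed

lemma smoothing_in_Imm:
  assumes H_Imm: "\<forall>z\<in>{0..1}. \<forall>t\<in>{0..1}. H z t \<in> Imm n"
    and tolerance: "\<forall>z\<in>{0..1}. \<forall>t\<in>{0..1}. \<forall>g. C1_loop g \<and> (\<exists>c>0. D g 0 = of_real c) \<and> C1_close e g (H z t)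
      \<longrightarrow> g \<in> Imm n"
    and approx: "\<forall>w\<in>{0..1}. \<forall>t\<in>{0..1}. C1_close e (bernstein_approx N (H w) t) (H w t)"
    and z: "z \<in> {0..1}" and t: "t \<in> {0..1}"
  shows "smoothing N \<gamma> H z t \<in> Imm n"
proof -
  have "\<forall>w\<in>{0..1}. \<forall>t\<in>{0..1}. \<exists>c>0. D (H w t) 0 = of_real c" using H_Imm by (simp add: Imm_def)
  then show ?thesis
    using tolerance smoothing_C1_loop(1)[OF z t] smoothing_deriv_0_positive[OF _ z t]
      smoothing_C1_close[OF approx z t] ramps_in_unit_interval[OF z] t by blast
qed

lemma smoothing_end_embedding:
  assumes tolerance: "\<forall>t\<in>{0..1}. \<forall>g. C1_loop g \<and> C1_close e g (H 1 t) \<longrightarrow> embedding_loop g"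
    and approx: "\<forall>w\<in>{0..1}. \<forall>t\<in>{0..1}. C1_close e (bernstein_approx N (H w) t) (H w t)"
    and t: "t \<in> {0..1}"
  shows "embedding_loop (smoothing N \<gamma> H 1 t)"
  using tolerance smoothing_C1_loop(1)[of 1 t] smoothing_C1_close[OF approx _ t, of 1] t by simp

lemma smoothing_C1_with_derivs:
  assumes z: "z \<in> {0..1}"
  shows "C1_with_derivs ({0..1} \<times> UNIV) (\<lambda>(t, s). smoothing N \<gamma> H z t s) (smoothing_dt N Ft H z) (smoothing_ds N Fs H z)"
proof -
  let ?S = "{0..1::real} \<times> (UNIV :: real set)"
  define w where "w = second_ramp z"
  have w: "w \<in> {0..1}" using ramps_in_unit_interval[OF z] by (auto simp: w_def)
  note loops = node_loops[OF w]
  have eq: "(\<lambda>(t, s). smoothing N \<gamma> H z t s)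
      = (\<lambda>p. (1 - first_ramp z) *\<^sub>R (\<lambda>(t, s). \<gamma> t s) p + first_ramp z *\<^sub>R (\<lambda>(t, s). bernstein_approx N (H w) t s) p)"
    by (auto simp: fun_eq_iff smoothing_def w_def)
  have "((\<lambda>(t, s). smoothing N \<gamma> H z t s) has_derivative
      (\<lambda>(x, y). x *\<^sub>R smoothing_dt N Ft H z p + y *\<^sub>R smoothing_ds N Fs H z p)) (at p within ?S)"
    if "p \<in> ?S" for p
  proof -
    obtain t s where p: "p = (t, s)" by fastforce
    have "((\<lambda>(t, s). \<gamma> t s) has_derivative (\<lambda>(x, y). x *\<^sub>R Ft (t, s) + y *\<^sub>R Fs (t, s)))
        (at (t, s) within ?S)"
      using \<gamma>_C1 that unfolding C1_with_derivs_def p by blast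
    moreover note grid_combination_has_derivative[where c="Bernstein N" and c'="Bernstein_deriv N",
        OF has_real_derivative_Bernstein loops, of t s ?S]
    ultimately show ?thesis unfolding eq p
      by (rule has_derivative_eq_rhs[OF has_derivative_add[OF has_derivative_scaleR_right has_derivative_scaleR_right]])
        (auto simp: fun_eq_iff smoothing_dt_def smoothing_ds_def w_def algebra_simps)
  qed
  moreover have "continuous_on ?S (smoothing_dt N Ft H z)" "continuous_on ?S (smoothing_ds N Fs H z)"
    using \<gamma>_C1 loops C1_loop_continuous C1_loop_continuous_deriv
    unfolding smoothing_dt_def smoothing_ds_def C1_with_derivs_def w_def[symmetric]
    by (auto intro!: continuous_intros grid_combination_continuous_on
        continuous_on_Bernstein continuous_on_Bernstein_deriv)
  ultimately show ?thesis unfolding C1_with_derivs_def by blast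
qed

lemma homotopy_bounded:
  obtains M where "\<forall>w\<in>{0..1}. \<forall>v\<in>{0..1}. \<forall>s. cmod (H w v s) \<le> M"
    and "\<forall>w\<in>{0..1}. \<forall>v\<in>{0..1}. \<forall>s. cmod (D (H w v) s) \<le> M"
proof -
  have "\<forall>p\<in>{0..1} \<times> {0..1}. C1_loop ((\<lambda>(z, t). H z t) p)" using H_loop by auto
  from C1_continuous_on_compact_bounded[OF compact_Times[OF compact_Icc compact_Icc] H_cont this]
  obtain M where "\<forall>p\<in>{0..1} \<times> {0..1}. \<forall>s. cmod ((\<lambda>(z, t). H z t) p s) \<le> M
      \<and> cmod (D ((\<lambda>(z, t). H z t) p) s) \<le> M" by blast
  then show ?thesis by (intro that[of M]) force+
qed

lemma homotopy_equicontinuous: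
  assumes "\<epsilon> > 0"
  shows "\<exists>d>0. \<forall>w\<in>{0..1}. \<forall>w'\<in>{0..1}. \<bar>w - w'\<bar> < d \<longrightarrow> (\<forall>v\<in>{0..1}. C1_close \<epsilon> (H w v) (H w' v))"
proof -
  have "\<forall>p\<in>{0..1} \<times> {0..1}. C1_loop ((\<lambda>(z, t). H z t) p)" using H_loop by auto
  from C1_continuous_on_compact_uniform[OF compact_Times[OF compact_Icc compact_Icc] H_cont this assms]
  obtain d where "d > 0" and d: "\<forall>p\<in>{0..1} \<times> {0..1}. \<forall>q\<in>{0..1} \<times> {0..1}. dist p q < d
      \<longrightarrow> C1_close \<epsilon> ((\<lambda>(z, t). H z t) p) ((\<lambda>(z, t). H z t) q)" by blast
  have "C1_close \<epsilon> (H w v) (H w' v)" if "w \<in> {0..1}" "w' \<in> {0..1}" "\<bar>w - w'\<bar> < d" "v \<in> {0..1}" for w w' v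
    using d[rule_format, of "(w, v)" "(w', v)"] that by (simp add: dist_Pair_Pair dist_real_def)
  then show ?thesis using \<open>d > 0\<close> by blast
qed

lemma smoothing_family_continuous:
  "C1_family_continuous {0..1} ({0..1} \<times> UNIV) (\<lambda>z (t, s). smoothing N \<gamma> H z t s)
     (smoothing_dt N Ft H) (smoothing_ds N Fs H)"
  unfolding C1_family_continuous_def
proof (intro ballI allI impI)
  fix z e :: real assume z: "z \<in> {0..1}" and e: "e > 0"
  obtain M\<gamma> where u_bounds: "\<forall>p\<in>{0..1} \<times> UNIV. cmod (\<gamma> (fst p) (snd p)) \<le> M\<gamma>"
    "\<forall>p\<in>{0..1} \<times> UNIV. cmod (Ft p) \<le> M\<gamma>" "\<forall>p\<in>{0..1} \<times> UNIV. cmod (Fs p) \<le> M\<gamma>"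
    using C1_with_derivs_loops_bounded[OF \<gamma>_C1 \<gamma>_loop] by blast
  obtain M where M: "\<forall>w\<in>{0..1}. \<forall>v\<in>{0..1}. \<forall>s. cmod (H w v s) \<le> M"
    "\<forall>w\<in>{0..1}. \<forall>v\<in>{0..1}. \<forall>s. cmod (D (H w v) s) \<le> M"
    using homotopy_bounded by blast
  have H_equi: "\<forall>\<epsilon>>0. \<exists>d>0. \<forall>w\<in>{0..1}. \<forall>w'\<in>{0..1}. \<bar>w - w'\<bar> < d \<longrightarrow> (\<forall>v\<in>{0..1}. \<forall>s. cmod (H w v s - H w' v s) \<le> \<epsilon>)"
    and DH_equi: "\<forall>\<epsilon>>0. \<exists>d>0. \<forall>w\<in>{0..1}. \<forall>w'\<in>{0..1}. \<bar>w - w'\<bar> < d \<longrightarrow> (\<forall>v\<in>{0..1}. \<forall>s. cmod (D (H w v) s - D (H w' v) s) \<le> \<epsilon>)"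
    using homotopy_equicontinuous unfolding C1_close_def by meson+
  have B_weights: "\<forall>t\<in>{0..1}. (\<Sum>k\<le>N. \<bar>Bernstein N k t\<bar>) \<le> 1"
    using Bernstein_nonneg by simp
  obtain Cd where dB_weights: "\<forall>t\<in>{0..1}. (\<Sum>k\<le>N. \<bar>Bernstein_deriv N k t\<bar>) \<le> Cd"
    using Bernstein_deriv_weights_bounded by blast
  have ramps: "continuous_on {0..1} first_ramp" "\<forall>z\<in>{0..1}. first_ramp z \<in> {0..1}"
    "continuous_on {0..1} second_ramp" "\<forall>z\<in>{0..1}. second_ramp z \<in> {0..1}"
    using continuous_on_ramps ramps_in_unit_interval by auto
  obtain d1 where "d1 > 0" and d1: "\<forall>z'\<in>{0..1}. \<bar>z' - z\<bar> < d1 \<longrightarrow> (\<forall>p\<in>{0..1} \<times> UNIV.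
      cmod (smoothing N \<gamma> H z' (fst p) (snd p) - smoothing N \<gamma> H z (fst p) (snd p)) \<le> e)"
    using grid_interval_combination_continuous[OF ramps u_bounds(1) B_weights M(1) H_equi z e]
    unfolding smoothing_def by blast
  obtain d2 where "d2 > 0" and d2: "\<forall>z'\<in>{0..1}. \<bar>z' - z\<bar> < d2 \<longrightarrow> (\<forall>p\<in>{0..1} \<times> UNIV.
      cmod (smoothing_dt N Ft H z' p - smoothing_dt N Ft H z p) \<le> e)"
    using grid_interval_combination_continuous[OF ramps u_bounds(2) dB_weights M(1) H_equi z e]
    unfolding smoothing_dt_def by blast
  obtain d3 where "d3 > 0" and d3: "\<forall>z'\<in>{0..1}. \<bar>z' - z\<bar> < d3 \<longrightarrow> (\<forall>p\<in>{0..1} \<times> UNIV.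
      cmod (smoothing_ds N Fs H z' p - smoothing_ds N Fs H z p) \<le> e)"
    using grid_interval_combination_continuous[OF ramps u_bounds(3) B_weights M(2) DH_equi z e]
    unfolding smoothing_ds_def by blast
  show "\<exists>d>0. \<forall>z'\<in>{0..1}. \<bar>z' - z\<bar> < d \<longrightarrow> (\<forall>p\<in>{0..1} \<times> UNIV.
      cmod ((\<lambda>z (t, s). smoothing N \<gamma> H z t s) z' p - (\<lambda>z (t, s). smoothing N \<gamma> H z t s) z p) \<le> e
      \<and> cmod (smoothing_dt N Ft H z' p - smoothing_dt N Ft H z p) \<le> e
      \<and> cmod (smoothing_ds N Fs H z' p - smoothing_ds N Fs H z p) \<le> e)"
    using d1 d2 d3 \<open>d1 > 0\<close> \<open>d2 > 0\<close> \<open>d3 > 0\<close>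
    by (intro exI[of _ "min d1 (min d2 d3)"]) (auto simp: case_prod_unfold)
qed

end

theorem mainTheorem4:
  fixes n :: int
    and \<gamma> :: "real \<Rightarrow> real \<Rightarrow> complex"
    and ht :: "real \<Rightarrow> real \<Rightarrow> real \<Rightarrow> complex"
  assumes path_in: "\<forall>t\<in>{0..1}. \<gamma> t \<in> Imm n"
    and path_cont: "C1_continuous_on {0..1} \<gamma>"
    and ht_in: "\<forall>z\<in>{0..1}. \<forall>t\<in>{0..1}. ht z t \<in> Imm n"
    and ht_cont: "C1_continuous_on ({0..1} \<times> {0..1}) (\<lambda>(z, t). ht z t)"
    and ht_start: "\<forall>t\<in>{0..1}. ht 0 t = \<gamma> t"
    and C1: "C1_on ({0..1} \<times> UNIV) (\<lambda>(t, s). \<gamma> t s)"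
    and emb_end: "\<forall>t\<in>{0..1}. embedding_loop (ht 1 t)"
    and emb_sides: "\<forall>z\<in>{0..1}. embedding_loop (ht z 0) \<and> embedding_loop (ht z 1)"
  shows "\<exists>h :: real \<Rightarrow> real \<Rightarrow> real \<Rightarrow> complex. \<exists>Ht Hs.
     (\<forall>z\<in>{0..1}. \<forall>t\<in>{0..1}. h z t \<in> Imm n)
   \<and> (\<forall>t\<in>{0..1}. h 0 t = \<gamma> t)
   \<and> (\<forall>z\<in>{0..1}. C1_with_derivs ({0..1} \<times> UNIV) (\<lambda>(t, s). h z t s) (Ht z) (Hs z))
   \<and> C1_family_continuous {0..1} ({0..1} \<times> UNIV) (\<lambda>z (t, s). h z t s) Ht Hs
   \<and> (\<forall>t\<in>{0..1}. embedding_loop (h 1 t))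
   \<and> (\<forall>z\<in>{0..1}. embedding_loop (h z 0) \<and> embedding_loop (h z 1))"
proof -
  obtain Ft Fs where C: "C1_with_derivs ({0..1} \<times> UNIV) (\<lambda>(t, s). \<gamma> t s) Ft Fs"
    using C1 unfolding C1_on_def by blast
  obtain e where "e > 0"
    and tol_Imm: "\<forall>z\<in>{0..1}. \<forall>t\<in>{0..1}. \<forall>g. C1_loop g \<and> (\<exists>c>0. D g 0 = of_real c) \<and> C1_close e g (ht z t)
        \<longrightarrow> g \<in> Imm n"
    and tol_emb: "\<forall>t\<in>{0..1}. \<forall>g. C1_loop g \<and> C1_close e g (ht 1 t) \<longrightarrow> embedding_loop g"
    using homotopy_C1_tolerance[OF ht_in ht_cont emb_end] by blast
  have ht_loop: "\<forall>z\<in>{0..1}. \<forall>t\<in>{0..1}. C1_loop (ht z t)" using ht_in by (simp add: Imm_def)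
  obtain N where "N > 0" and approx: "\<forall>w\<in>{0..1}. \<forall>t\<in>{0..1}. C1_close e (bernstein_approx N (ht w) t) (ht w t)"
    using bernstein_approx_C1_uniform[OF ht_cont ht_loop \<open>e > 0\<close>] by blast
  interpret smoothing_setup N \<gamma> Ft Fs ht
    using \<open>N > 0\<close> C path_in ht_cont ht_loop ht_start by unfold_locales (auto simp: Imm_def)
  show ?thesis
    using smoothing_in_Imm[OF ht_in tol_Imm approx] smoothing_at_0 smoothing_C1_with_derivs
      smoothing_family_continuous smoothing_end_embedding[OF tol_emb approx] smoothing_sides_embedding[OF emb_sides]
    by (intro exI[of _ "smoothing N \<gamma> ht"] exI[of _ "smoothing_dt N Ft ht"] exI[of _ "smoothing_ds N Fs ht"]
        conjI ballI) simp_all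
qed

end
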